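(* There exists $n_0$ such that the following holds for every integer $n\ge n_0$. Let $Z$ be a finite set with $|Z|\ge n^{1/4}$ and let $T_1,T_2$ be rooted $Z$-trees with $\mathrm{Seq}(T_1)=\mathrm{Seq}(T_2)$ such that $|Q_j|\le |Z|/20$ and $|R_l|\le |Z|/20$ for all $1\le j\le k$, $1\le l\le m$ (with $Q_j,R_l$ as defined in the context). Then at least one of the following holds: (i) there exist disjoint sets $X,Y\subset Z$ with $|X|\ge n^{1/16}$, $|Y|\ge |Z|/(10\log n)$, such that $\mathrm{lca}_{T_1}(X)$ and $\mathrm{lca}_{T_1}(Y)$ are incomparable and $\mathrm{lca}_{T_2}(X)$ and $\mathrm{lca}_{T_2}(Y)$ are incomparable; (ii) there is a set $A\subseteq Z$ with $|A|\ge\frac{1}{48}\log n$ such that the unrooted trees obtained from $T_1|A$ and $T_2|A$ by suppressing the root are identical caterpillars.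
   Context: A rooted $Z$-tree is a binary rooted tree with a root of degree two, all other internal nodes of degree three, leaves bijectively labeled by $Z$, and each internal node having a designated left child and right child. $T_v$ is the subtree rooted at node $v$; the size of a tree is its number of leaves. Nodes $x,y$ are incomparable if neither is a descendant of the other; $\mathrm{lca}_T(W)$ is the lowest node having all elements of $W$ as descendants. For $A\subseteq Z$, $T|A$ is the rooted tree obtained from the minimal subtree spanning $A$, rooted at $\mathrm{lca}_T(A)$, by suppressing non-root degree-two nodes. $\mathrm{Seq}(T)$ is the left-to-right leaf ordering given by pre-order traversal (left child before right child). Let $P_1=(u_1,\dots,u_k)$ be the path in $T_1$ from its left-most leaf $u_1$ to its root $u_k$; $Q_1:=$ the one-leaf tree $u_1$ and for $2\le j\le k$, $Q_j:=(T_1)_c$ with $c$ the child of $u_j$ other than $u_{j-1}$. Let $P_2=(w_1,\dots,w_m)$ be the path in $T_2$ from its root $w_1$ to its right-most leaf $w_m$; $R_m:=$ the one-leaf tree $w_m$ and for $1\le l<m$, $R_l:=(T_2)_c$ with $c$ the child of $w_l$ other than $w_{l+1}$. A tree is a caterpillar if every internal node is adjacent to at least one leaf; unrooted trees are identical if there is a label-preserving graph isomorphism. $\log=\log_2$. *)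

theory Defs
  imports Complex_Main "HOL-Library.Sublist"
begin

datatype 'a tree = Lf 'a | Nd "'a tree" "'a tree"

text \<open>Seq(T): left-to-right leaf order (pre-order traversal).\<close>
fun leaves :: "'a tree \<Rightarrow> 'a list" where
  "leaves (Lf a) = [a]"
| "leaves (Nd l r) = leaves l @ leaves r"

definition ztree :: "'a set \<Rightarrow> 'a tree \<Rightarrow> bool" where
  "ztree Z t \<longleftrightarrow> distinct (leaves t) \<and> set (leaves t) = Z"

text \<open>Nodes are positions: paths from the root (False = left child, True = right child).\<close>
fun positions :: "'a tree \<Rightarrow> bool list set" where
  "positions (Lf a) = {[]}"
| "positions (Nd l r) = insert [] ((\<lambda>p. False # p) ` positions l \<union> (\<lambda>p. True # p) ` positions r)"

fun subtree :: "'a tree \<Rightarrow> bool list \<Rightarrow> 'a tree" where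
  "subtree t [] = t"
| "subtree (Nd l r) (False # p) = subtree l p"
| "subtree (Nd l r) (True # p) = subtree r p"
| "subtree (Lf a) (b # p) = Lf a"

text \<open>Node q is a descendant of node p iff p is a prefix of q.\<close>
definition incomparable :: "bool list \<Rightarrow> bool list \<Rightarrow> bool" where
  "incomparable p q \<longleftrightarrow> \<not> prefix p q \<and> \<not> prefix q p"

definition lca :: "'a tree \<Rightarrow> 'a set \<Rightarrow> bool list" where
  "lca t W = (THE p. p \<in> positions t \<and> W \<subseteq> set (leaves (subtree t p)) \<and>
      (\<forall>q \<in> positions t. W \<subseteq> set (leaves (subtree t q)) \<longrightarrow> prefix q p))"

text \<open>Q_1, ..., Q_k: the leftmost leaf, then the right subtrees hanging off the path
  from the leftmost leaf to the root (in that order).\<close>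
fun Qs :: "'a tree \<Rightarrow> 'a tree list" where
  "Qs (Lf a) = [Lf a]"
| "Qs (Nd l r) = Qs l @ [r]"

text \<open>R_1, ..., R_m: the left subtrees hanging off the path from the root to the
  rightmost leaf, then the rightmost leaf.\<close>
fun Rs :: "'a tree \<Rightarrow> 'a tree list" where
  "Rs (Lf a) = [Lf a]"
| "Rs (Nd l r) = l # Rs r"

text \<open>T|A: minimal subtree spanning A, rooted at its lca, with degree-two nodes suppressed
  (None if A contains no leaf of the tree).\<close>
fun restr :: "'a set \<Rightarrow> 'a tree \<Rightarrow> 'a tree option" where
  "restr A (Lf a) = (if a \<in> A then Some (Lf a) else None)"
| "restr A (Nd l r) = (case (restr A l, restr A r) of
      (Some l', Some r') \<Rightarrow> Some (Nd l' r')
    | (Some l', None) \<Rightarrow> Some l'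
    | (None, Some r') \<Rightarrow> Some r'
    | (None, None) \<Rightarrow> None)"

text \<open>The unrooted tree obtained by suppressing the root: vertices, edges, labels.\<close>
definition uverts :: "'a tree \<Rightarrow> bool list set" where
  "uverts t = (case t of Lf a \<Rightarrow> {[]} | Nd l r \<Rightarrow> positions t - {[]})"

definition uedges :: "'a tree \<Rightarrow> bool list set set" where
  "uedges t = {{p, p @ [b]} | p b. p \<noteq> [] \<and> p @ [b] \<in> positions t}
      \<union> (case t of Lf a \<Rightarrow> {} | Nd l r \<Rightarrow> {{[False], [True]}})"

definition ulabel :: "'a tree \<Rightarrow> bool list \<Rightarrow> 'a option" where
  "ulabel t p = (if p \<in> positions t then
      (case subtree t p of Lf a \<Rightarrow> Some a | Nd l r \<Rightarrow> None) else None)"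

definition identical_unrooted :: "'a tree \<Rightarrow> 'a tree \<Rightarrow> bool" where
  "identical_unrooted t1 t2 \<longleftrightarrow> (\<exists>f. bij_betw f (uverts t1) (uverts t2) \<and>
      (\<forall>p \<in> uverts t1. \<forall>q \<in> uverts t1. {p, q} \<in> uedges t1 \<longleftrightarrow> {f p, f q} \<in> uedges t2) \<and>
      (\<forall>p \<in> uverts t1. ulabel t2 (f p) = ulabel t1 p))"

definition caterpillar_unrooted :: "'a tree \<Rightarrow> bool" where
  "caterpillar_unrooted t \<longleftrightarrow> (\<forall>v \<in> uverts t. ulabel t v = None \<longrightarrow>
      (\<exists>u \<in> uverts t. {u, v} \<in> uedges t \<and> ulabel t u \<noteq> None))"

end

(* Index the common leaf sequence of T1 and T2 by 0, ..., N-1 and label every index by the block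
   Q_j of T1 and the block R_l of T2 containing its leaf. Both labellings are monotone and all
   their blocks have at most N/20 elements. A counting argument on two such labellings shows that
   one of four configurations occurs. A large R-block lying entirely before a large Q-block yields
   the sets X and Y of (i), since in each tree the two sets lie in disjoint subtrees.
   Leaves from pairwise distinct Q-blocks and pairwise distinct R-blocks restrict to a left comb
   in T1 and a right comb in T2, which become the same caterpillar once the root is suppressed.
   Finally, a block of one tree meeting K blocks of the other tree contains K leaves from distinct
   blocks, and every tree on m leaves restricts to a left or a right comb on (log m)/2 + 1 of them;
   restricted to such a comb, the other tree is a comb as well. *)

theory Submission
  imports Defs
begin

lemma leaves_not_Nil [simp]: "leaves t \<noteq> []"
  by (induction t) auto

lemma length_leaves_Nd: "2 \<le> length (leaves (Nd l r))"
  by (cases "leaves l"; cases "leaves r") auto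

lemma concat_leaves_Qs: "concat (map leaves (Qs t)) = leaves t"
  by (induction t) auto

lemma concat_leaves_Rs: "concat (map leaves (Rs t)) = leaves t"
  by (induction t) auto

lemma set_leaves_Qs: "Q \<in> set (Qs t) \<Longrightarrow> set (leaves Q) \<subseteq> set (leaves t)"
  by (subst concat_leaves_Qs[symmetric]) auto

lemma set_leaves_Rs: "R \<in> set (Rs t) \<Longrightarrow> set (leaves R) \<subseteq> set (leaves t)"
  by (subst concat_leaves_Rs[symmetric]) auto

lemma root_in_positions [simp]: "[] \<in> positions t"
  by (cases t) auto

lemma append_in_positions:
  "p \<in> positions t \<Longrightarrow> p @ q \<in> positions t \<longleftrightarrow> q \<in> positions (subtree t p)"
  by (induction t arbitrary: p) (auto simp: Cons_eq_append_conv split: bool.splits)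

lemma subtree_append: "p \<in> positions t \<Longrightarrow> subtree t (p @ q) = subtree (subtree t p) q"
  by (induction t arbitrary: p) (auto split: bool.splits)

lemma set_leaves_subtree: "p \<in> positions t \<Longrightarrow> set (leaves (subtree t p)) \<subseteq> set (leaves t)"
  by (induction t arbitrary: p) (fastforce split: bool.splits)+

fun lca_rec :: "'a tree \<Rightarrow> 'a set \<Rightarrow> bool list" where
  "lca_rec (Lf a) X = []"
| "lca_rec (Nd l r) X = (if X \<subseteq> set (leaves l) then False # lca_rec l X
     else if X \<subseteq> set (leaves r) then True # lca_rec r X else [])"

lemma lca_rec_is_lca:
  assumes "distinct (leaves t)" "X \<noteq> {}" "X \<subseteq> set (leaves t)"
  shows "lca_rec t X \<in> positions t \<and> X \<subseteq> set (leaves (subtree t (lca_rec t X))) \<and>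
    (\<forall>q \<in> positions t. X \<subseteq> set (leaves (subtree t q)) \<longrightarrow> prefix q (lca_rec t X))"
  using assms
proof (induction t)
  case (Lf a)
  then show ?case by auto
next
  case (Nd l r)
  have disjoint: "set (leaves l) \<inter> set (leaves r) = {}"
    using Nd.prems(1) by auto
  have child: "X \<subseteq> set (leaves (if b then r else l))"
    if "b # q \<in> positions (Nd l r)" "X \<subseteq> set (leaves (subtree (Nd l r) (b # q)))" for b q
    using that set_leaves_subtree by (cases b) force+
  have "\<forall>q \<in> positions (Nd l r). X \<subseteq> set (leaves (subtree (Nd l r) q)) \<longrightarrow> prefix q (lca_rec (Nd l r) X)"
  proof (intro ballI impI)
    fix q assume q: "q \<in> positions (Nd l r)" "X \<subseteq> set (leaves (subtree (Nd l r) q))"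
    show "prefix q (lca_rec (Nd l r) X)"
    proof (cases q)
      case (Cons b q')
      with q child[of b q'] have "X \<subseteq> set (leaves (if b then r else l))" by simp
      with q Cons Nd disjoint show ?thesis by (cases b) auto
    qed simp
  qed
  with Nd show ?case by auto
qed

lemma lca_eq_lca_rec:
  assumes "distinct (leaves t)" "X \<noteq> {}" "X \<subseteq> set (leaves t)"
  shows "lca t X = lca_rec t X"
  unfolding lca_def
proof (rule the_equality)
  show "lca_rec t X \<in> positions t \<and> X \<subseteq> set (leaves (subtree t (lca_rec t X))) \<and>
      (\<forall>q \<in> positions t. X \<subseteq> set (leaves (subtree t q)) \<longrightarrow> prefix q (lca_rec t X))"
    using lca_rec_is_lca[OF assms] .
  then show "p = lca_rec t X" if "p \<in> positions t \<and> X \<subseteq> set (leaves (subtree t p)) \<and>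
      (\<forall>q \<in> positions t. X \<subseteq> set (leaves (subtree t q)) \<longrightarrow> prefix q p)" for p
    using that by (blast intro: prefix_order.antisym)
qed

lemma incomparable_Cons_Cons [simp]: "incomparable (b # p) (b # q) \<longleftrightarrow> incomparable p q"
  by (auto simp: incomparable_def)

lemma incomparable_False_True: "incomparable (False # p) (True # q)"
  by (auto simp: incomparable_def)

lemma incomparable_commute: "incomparable p q \<longleftrightarrow> incomparable q p"
  by (auto simp: incomparable_def)

lemma incomparable_lca_Qs:
  assumes "distinct (leaves t)" "a < length (Qs t)"
    and "X \<noteq> {}" "X \<subseteq> set (leaves (Qs t ! a))"
    and "Y \<noteq> {}" "Y \<subseteq> set (concat (map leaves (take a (Qs t))))"
  shows "incomparable (lca_rec t X) (lca_rec t Y)"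
  using assms
proof (induction t arbitrary: a)
  case (Nd l r)
  have disjoint: "set (leaves l) \<inter> set (leaves r) = {}"
    using Nd.prems(1) by auto
  show ?case
  proof (cases "a < length (Qs l)")
    case True
    then have "X \<subseteq> set (leaves (Qs l ! a))" "Y \<subseteq> set (concat (map leaves (take a (Qs l))))"
      using Nd.prems by (auto simp: nth_append)
    moreover from this have "X \<subseteq> set (leaves l)" "Y \<subseteq> set (leaves l)"
      using True set_leaves_Qs[OF nth_mem, of a l]
      by (auto simp flip: concat_leaves_Qs[of l]) (blast dest: in_set_takeD)
    ultimately show ?thesis
      using Nd True by simp
  next
    case False
    with Nd.prems(2) have "a = length (Qs l)" by simp
    with Nd.prems have X: "X \<subseteq> set (leaves r)" and Y: "Y \<subseteq> set (leaves l)"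
      by (auto simp flip: concat_leaves_Qs[of l])
    with Nd.prems(3) disjoint have "\<not> X \<subseteq> set (leaves l)" by blast
    with X Y show ?thesis
      by (simp add: incomparable_commute incomparable_False_True)
  qed
qed simp

lemma incomparable_lca_Rs:
  assumes "distinct (leaves t)" "c < length (Rs t)"
    and "X \<noteq> {}" "X \<subseteq> set (leaves (Rs t ! c))"
    and "Y \<noteq> {}" "Y \<subseteq> set (concat (map leaves (drop (Suc c) (Rs t))))"
  shows "incomparable (lca_rec t X) (lca_rec t Y)"
  using assms
proof (induction t arbitrary: c)
  case (Nd l r)
  have disjoint: "set (leaves l) \<inter> set (leaves r) = {}"
    using Nd.prems(1) by auto
  show ?case
  proof (cases c)
    case 0
    with Nd.prems have "X \<subseteq> set (leaves l)" "Y \<subseteq> set (leaves r)"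
      by (auto simp flip: concat_leaves_Rs[of r])
    with Nd.prems disjoint show ?thesis
      by (auto simp: incomparable_False_True)
  next
    case (Suc c')
    then have "c' < length (Rs r)" "X \<subseteq> set (leaves (Rs r ! c'))"
      "Y \<subseteq> set (concat (map leaves (drop (Suc c') (Rs r))))"
      using Nd.prems by auto
    moreover from this have "X \<subseteq> set (leaves r)" "Y \<subseteq> set (leaves r)"
      using set_leaves_Rs[OF nth_mem, of c' r]
      by (auto simp flip: concat_leaves_Rs[of r]) (blast dest: in_set_dropD)
    ultimately show ?thesis
      using Nd disjoint Suc by auto
  qed
qed simp

lemma restr_eq_None_iff: "restr A t = None \<longleftrightarrow> set (leaves t) \<inter> A = {}"
  by (induction t) (auto split: option.splits)

lemma leaves_restr: "restr A t = Some s \<Longrightarrow> leaves s = filter (\<lambda>x. x \<in> A) (leaves t)"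
  by (induction t arbitrary: s)
    (auto split: option.splits if_splits simp: restr_eq_None_iff filter_empty_conv)

lemma restr_cong: "A \<inter> set (leaves t) = B \<inter> set (leaves t) \<Longrightarrow> restr A t = restr B t"
proof (induction t)
  case (Nd l r)
  then have "restr A l = restr B l" "restr A r = restr B r" by auto
  then show ?case by simp
qed auto

lemma restr_Nd_left: "A \<inter> set (leaves r) = {} \<Longrightarrow> restr A (Nd l r) = restr A l"
proof -
  assume "A \<inter> set (leaves r) = {}"
  then have "restr A r = None" by (simp add: restr_eq_None_iff Int_commute)
  then show ?thesis by (cases "restr A l") auto
qed

lemma restr_Nd_right: "A \<inter> set (leaves l) = {} \<Longrightarrow> restr A (Nd l r) = restr A r"
proof -
  assume "A \<inter> set (leaves l) = {}"
  then have "restr A l = None" by (simp add: restr_eq_None_iff Int_commute)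
  then show ?thesis by (cases "restr A r") auto
qed

lemma restr_singleton: "distinct (leaves t) \<Longrightarrow> x \<in> set (leaves t) \<Longrightarrow> restr {x} t = Some (Lf x)"
proof (induction t)
  case (Nd l r)
  show ?case
  proof (cases "x \<in> set (leaves l)")
    case True
    with Nd.prems(1) have "{x} \<inter> set (leaves r) = {}" by auto
    with Nd True show ?thesis by (simp add: restr_Nd_left del: restr.simps)
  next
    case False
    then have "{x} \<inter> set (leaves l) = {}" by auto
    with Nd False show ?thesis by (simp add: restr_Nd_right del: restr.simps)
  qed
qed simp

lemma restr_in_Qs:
  assumes "Q \<in> set (Qs t)" "distinct (leaves t)" "A \<subseteq> set (leaves Q)"
  shows "restr A t = restr A Q"
  using assms
proof (induction t)
  case (Nd l r)
  have disjoint: "set (leaves l) \<inter> set (leaves r) = {}"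
    using Nd.prems(2) by simp
  show ?case
  proof (cases "Q = r")
    case True
    with Nd.prems(3) disjoint have "A \<inter> set (leaves l) = {}" by blast
    with True show ?thesis by (simp add: restr_Nd_right del: restr.simps)
  next
    case False
    with Nd.prems(1) have Q: "Q \<in> set (Qs l)" by simp
    with Nd.prems(3) disjoint set_leaves_Qs[OF Q] have "A \<inter> set (leaves r) = {}" by blast
    with Nd Q show ?thesis by (simp add: restr_Nd_left del: restr.simps)
  qed
qed simp

lemma restr_in_Rs:
  assumes "R \<in> set (Rs t)" "distinct (leaves t)" "A \<subseteq> set (leaves R)"
  shows "restr A t = restr A R"
  using assms
proof (induction t)
  case (Nd l r)
  have disjoint: "set (leaves l) \<inter> set (leaves r) = {}"
    using Nd.prems(2) by simp
  show ?case
  proof (cases "R = l")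
    case True
    with Nd.prems(3) disjoint have "A \<inter> set (leaves r) = {}" by blast
    with True show ?thesis by (simp add: restr_Nd_left del: restr.simps)
  next
    case False
    with Nd.prems(1) have R: "R \<in> set (Rs r)" by simp
    with Nd.prems(3) disjoint set_leaves_Rs[OF R] have "A \<inter> set (leaves l) = {}" by blast
    with Nd R show ?thesis by (simp add: restr_Nd_right del: restr.simps)
  qed
qed simp

fun left_comb :: "'a tree \<Rightarrow> bool" where
  "left_comb (Lf a) \<longleftrightarrow> True"
| "left_comb (Nd l r) \<longleftrightarrow> (\<exists>a. r = Lf a) \<and> left_comb l"

fun right_comb :: "'a tree \<Rightarrow> bool" where
  "right_comb (Lf a) \<longleftrightarrow> True"
| "right_comb (Nd l r) \<longleftrightarrow> (\<exists>a. l = Lf a) \<and> right_comb r"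

lemma restr_is_leaf:
  assumes "length (filter (\<lambda>x. x \<in> A) (leaves t)) \<le> 1" "restr A t = Some s"
  shows "\<exists>a. s = Lf a"
proof (cases s)
  case (Nd l r)
  from assms have "length (leaves s) \<le> 1" by (simp add: leaves_restr)
  with Nd length_leaves_Nd[of l r] show ?thesis by simp
qed simp

lemma left_comb_restr:
  "\<forall>Q \<in> set (Qs t). length (filter (\<lambda>x. x \<in> A) (leaves Q)) \<le> 1 \<Longrightarrow> restr A t = Some s \<Longrightarrow> left_comb s"
proof (induction t arbitrary: s)
  case (Nd l r)
  then show ?case
    using restr_is_leaf[of A r] by (auto split: option.splits)
qed (auto split: if_splits)

lemma right_comb_restr:
  "\<forall>R \<in> set (Rs t). length (filter (\<lambda>x. x \<in> A) (leaves R)) \<le> 1 \<Longrightarrow> restr A t = Some s \<Longrightarrow> right_comb s"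
proof (induction t arbitrary: s)
  case (Nd l r)
  then show ?case
    using restr_is_leaf[of A l] by (auto split: option.splits)
qed (auto split: if_splits)

lemma leaves_eq_singleton_iff: "leaves t = [a] \<longleftrightarrow> t = Lf a"
  by (cases t) (auto simp: append_eq_Cons_conv)

lemma left_comb_eqI: "left_comb t1 \<Longrightarrow> left_comb t2 \<Longrightarrow> leaves t1 = leaves t2 \<Longrightarrow> t1 = t2"
proof (induction t1 arbitrary: t2)
  case (Lf a)
  then show ?case by (metis leaves.simps(1) leaves_eq_singleton_iff)
next
  case (Nd l r)
  then obtain a where "r = Lf a" by auto
  with Nd show ?case
    by (cases t2) auto
qed

lemma right_comb_eqI: "right_comb t1 \<Longrightarrow> right_comb t2 \<Longrightarrow> leaves t1 = leaves t2 \<Longrightarrow> t1 = t2"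
proof (induction t1 arbitrary: t2)
  case (Lf a)
  then show ?case by (metis leaves.simps(1) leaves_eq_singleton_iff)
next
  case (Nd l r)
  then obtain a where "l = Lf a" by auto
  with Nd show ?case
    by (cases t2) auto
qed

lemma caterpillar_if_leaf_child:
  assumes "\<And>p l r. p \<in> positions t \<Longrightarrow> subtree t p = Nd l r \<Longrightarrow> (\<exists>a. l = Lf a) \<or> (\<exists>a. r = Lf a)"
  shows "caterpillar_unrooted t"
  unfolding caterpillar_unrooted_def
proof (intro ballI impI)
  fix v assume v: "v \<in> uverts t" "ulabel t v = None"
  show "\<exists>u \<in> uverts t. {u, v} \<in> uedges t \<and> ulabel t u \<noteq> None"
  proof (cases t)
    case (Lf a)
    with v show ?thesis by (simp add: uverts_def ulabel_def)
  next
    case Nd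
    with v have vp: "v \<in> positions t" "v \<noteq> []" by (auto simp: uverts_def)
    with v(2) obtain l r where lr: "subtree t v = Nd l r"
      unfolding ulabel_def by (cases "subtree t v") auto
    have "subtree (Nd l r) [False] = l" "subtree (Nd l r) [True] = r" by simp_all
    with assms[OF vp(1) lr] obtain b a where leaf: "subtree (Nd l r) [b] = Lf a" by metis
    have child: "v @ [b] \<in> positions t"
      using append_in_positions[OF vp(1)] lr by (cases b) auto
    then have "ulabel t (v @ [b]) = Some a"
      using subtree_append[OF vp(1)] lr leaf by (simp add: ulabel_def)
    moreover have "{v, v @ [b]} \<in> uedges t"
      using child vp(2) unfolding uedges_def by blast
    then have "{v @ [b], v} \<in> uedges t" by (metis insert_commute)
    moreover have "v @ [b] \<in> uverts t"
      using child Nd by (simp add: uverts_def)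
    ultimately show ?thesis by blast
  qed
qed

lemma left_comb_caterpillar: "left_comb t \<Longrightarrow> caterpillar_unrooted t"
proof (rule caterpillar_if_leaf_child)
  show "(\<exists>a. l = Lf a) \<or> (\<exists>a. r = Lf a)"
    if "left_comb t" "p \<in> positions t" "subtree t p = Nd l r" for p l r
    using that
  proof (induction t arbitrary: p)
    case (Nd l' r')
    then show ?case by (cases p) (auto split: bool.splits)
  qed simp
qed

lemma right_comb_caterpillar: "right_comb t \<Longrightarrow> caterpillar_unrooted t"
proof (rule caterpillar_if_leaf_child)
  show "(\<exists>a. l = Lf a) \<or> (\<exists>a. r = Lf a)"
    if "right_comb t" "p \<in> positions t" "subtree t p = Nd l r" for p l r
    using that
  proof (induction t arbitrary: p)
    case (Nd l' r')
    then show ?case by (cases p) (auto split: bool.splits)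
  qed simp
qed

lemma identical_unrooted_refl: "identical_unrooted t t"
  unfolding identical_unrooted_def by (rule exI[of _ id]) auto

lemma identical_unrooted_trans:
  assumes "identical_unrooted t1 t2" "identical_unrooted t2 t3"
  shows "identical_unrooted t1 t3"
proof -
  obtain f where f: "bij_betw f (uverts t1) (uverts t2)"
      "\<forall>p \<in> uverts t1. \<forall>q \<in> uverts t1. {p, q} \<in> uedges t1 \<longleftrightarrow> {f p, f q} \<in> uedges t2"
      "\<forall>p \<in> uverts t1. ulabel t2 (f p) = ulabel t1 p"
    using assms(1) unfolding identical_unrooted_def by blast
  obtain g where g: "bij_betw g (uverts t2) (uverts t3)"
      "\<forall>p \<in> uverts t2. \<forall>q \<in> uverts t2. {p, q} \<in> uedges t2 \<longleftrightarrow> {g p, g q} \<in> uedges t3"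
      "\<forall>p \<in> uverts t2. ulabel t3 (g p) = ulabel t2 p"
    using assms(2) unfolding identical_unrooted_def by blast
  have "f p \<in> uverts t2" if "p \<in> uverts t1" for p
    using f(1) that by (auto dest: bij_betwE)
  with f g bij_betw_trans[OF f(1) g(1)] show ?thesis
    unfolding identical_unrooted_def by (intro exI[of _ "g \<circ> f"]) auto
qed

text \<open>Rotating Nd (Nd L M) R into Nd L (Nd M R) only moves the root along an edge, so the two
  trees coincide once the root is suppressed; their positions correspond via rotate_pos.\<close>

fun rotate_pos :: "bool list \<Rightarrow> bool list" where
  "rotate_pos (False # False # q) = False # q"
| "rotate_pos (False # True # q) = True # False # q"
| "rotate_pos [False] = [True]"
| "rotate_pos (True # q) = True # True # q"
| "rotate_pos [] = []"

fun unrotate_pos :: "bool list \<Rightarrow> bool list" where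
  "unrotate_pos (False # q) = False # False # q"
| "unrotate_pos [True] = [False]"
| "unrotate_pos (True # False # q) = False # True # q"
| "unrotate_pos (True # True # q) = True # q"
| "unrotate_pos [] = []"

lemma unrotate_rotate_pos [simp]: "unrotate_pos (rotate_pos p) = p"
  by (induction p rule: rotate_pos.induct) auto

lemma rotate_unrotate_pos [simp]: "rotate_pos (unrotate_pos p) = p"
  by (induction p rule: unrotate_pos.induct) auto

lemma uedges_Nd_iff:
  "{p, q} \<in> uedges (Nd l r) \<longleftrightarrow>
   (p \<noteq> [] \<and> (\<exists>b. q = p @ [b]) \<and> q \<in> positions (Nd l r)) \<or>
   (q \<noteq> [] \<and> (\<exists>b. p = q @ [b]) \<and> p \<in> positions (Nd l r)) \<or>
   (p = [False] \<and> q = [True]) \<or> (p = [True] \<and> q = [False])"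
  unfolding uedges_def by (auto simp: doubleton_eq_iff)

lemma uverts_rotate_pos:
  "rotate_pos p \<in> uverts (Nd L (Nd M R)) \<longleftrightarrow> p \<in> uverts (Nd (Nd L M) R)"
  unfolding uverts_def by (induction p rule: rotate_pos.induct) auto

lemma uedges_rotate_pos:
  assumes "p \<in> uverts (Nd (Nd L M) R)" "q \<in> uverts (Nd (Nd L M) R)"
    and "{p, q} \<in> uedges (Nd (Nd L M) R)"
  shows "{rotate_pos p, rotate_pos q} \<in> uedges (Nd L (Nd M R))"
  using assms unfolding uverts_def uedges_Nd_iff
  apply (elim disjE conjE exE)
  subgoal for b by (induction p rule: rotate_pos.induct; cases b) auto
  subgoal for b by (induction q rule: rotate_pos.induct; cases b) auto
  by auto

lemma uedges_unrotate_pos: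
  assumes "p \<in> uverts (Nd L (Nd M R))" "q \<in> uverts (Nd L (Nd M R))"
    and "{p, q} \<in> uedges (Nd L (Nd M R))"
  shows "{unrotate_pos p, unrotate_pos q} \<in> uedges (Nd (Nd L M) R)"
  using assms unfolding uverts_def uedges_Nd_iff
  apply (elim disjE conjE exE)
  subgoal for b by (induction p rule: unrotate_pos.induct; cases b) auto
  subgoal for b by (induction q rule: unrotate_pos.induct; cases b) auto
  by auto

lemma identical_unrooted_rotate: "identical_unrooted (Nd (Nd L M) R) (Nd L (Nd M R))"
  unfolding identical_unrooted_def
proof (intro exI conjI ballI)
  show "bij_betw rotate_pos (uverts (Nd (Nd L M) R)) (uverts (Nd L (Nd M R)))"
    by (rule bij_betw_byWitness[where f' = unrotate_pos]) (auto simp flip: uverts_rotate_pos)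
  show "ulabel (Nd L (Nd M R)) (rotate_pos p) = ulabel (Nd (Nd L M) R) p"
    if "p \<in> uverts (Nd (Nd L M) R)" for p
    using that unfolding uverts_def ulabel_def by (induction p rule: rotate_pos.induct) auto
  show "{p, q} \<in> uedges (Nd (Nd L M) R) \<longleftrightarrow> {rotate_pos p, rotate_pos q} \<in> uedges (Nd L (Nd M R))"
    if "p \<in> uverts (Nd (Nd L M) R)" "q \<in> uverts (Nd (Nd L M) R)" for p q
    using that uedges_rotate_pos uedges_unrotate_pos[of "rotate_pos p" L M R "rotate_pos q"]
    by (auto simp: uverts_rotate_pos)
qed

lemma identical_unrooted_Nd_comb:
  "left_comb L \<Longrightarrow> right_comb R \<Longrightarrow> right_comb S \<Longrightarrow> leaves S = leaves L @ leaves R \<Longrightarrow>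
   identical_unrooted (Nd L R) S"
proof (induction L arbitrary: R)
  case (Lf a)
  then have "Nd (Lf a) R = S" by (intro right_comb_eqI) auto
  then show ?case using identical_unrooted_refl by metis
next
  case (Nd L' M)
  then obtain a where "M = Lf a" by auto
  with Nd have "identical_unrooted (Nd L' (Nd M R)) S" by simp
  then show ?case using identical_unrooted_rotate identical_unrooted_trans by blast
qed

lemma identical_unrooted_combs:
  assumes "leaves S1 = leaves S2" "left_comb S1 \<or> right_comb S1" "left_comb S2 \<or> right_comb S2"
    and "left_comb S1 \<or> right_comb S2"
  shows "identical_unrooted S1 S2"
proof (cases S1)
  case (Lf a)
  with assms(1) have "S2 = Lf a" by (metis leaves.simps(1) leaves_eq_singleton_iff)
  with Lf show ?thesis using identical_unrooted_refl by simp
next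
  case (Nd L R)
  from assms consider "left_comb S1" "left_comb S2" | "right_comb S1" "right_comb S2"
    | "left_comb S1" "right_comb S2" by blast
  then show ?thesis
  proof cases
    case 3
    with Nd obtain a where "R = Lf a" by auto
    with Nd 3 assms(1) identical_unrooted_Nd_comb[of L R S2] show ?thesis by simp
  qed (use assms(1) left_comb_eqI right_comb_eqI identical_unrooted_refl in metis)+
qed

definition common_caterpillar :: "'a set \<Rightarrow> 'a tree \<Rightarrow> 'a tree \<Rightarrow> bool" where
  "common_caterpillar A T1 T2 \<longleftrightarrow> (\<exists>S1 S2. restr A T1 = Some S1 \<and> restr A T2 = Some S2 \<and>
     caterpillar_unrooted S1 \<and> caterpillar_unrooted S2 \<and> identical_unrooted S1 S2)"

lemma common_caterpillarI:
  assumes "restr A T1 = Some S1" "restr A T2 = Some S2" "leaves T1 = leaves T2"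
    and "left_comb S1 \<or> right_comb S1" "left_comb S2 \<or> right_comb S2" "left_comb S1 \<or> right_comb S2"
  shows "common_caterpillar A T1 T2"
proof -
  have "leaves S1 = leaves S2"
    using assms(1-3) by (simp add: leaves_restr)
  with assms show ?thesis
    unfolding common_caterpillar_def
    by (meson identical_unrooted_combs left_comb_caterpillar right_comb_caterpillar)
qed

lemma restr_Nd_insert_right:
  assumes "distinct (leaves (Nd l r))" "A \<subseteq> set (leaves l)" "x \<in> set (leaves r)" "restr A l = Some s"
  shows "restr (insert x A) (Nd l r) = Some (Nd s (Lf x))"
proof -
  have "restr (insert x A) l = restr A l"
    using assms(1,3) by (intro restr_cong) auto
  moreover have "restr (insert x A) r = restr {x} r"
    using assms(1-3) by (intro restr_cong) auto
  ultimately show ?thesis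
    using assms by (simp add: restr_singleton)
qed

lemma restr_Nd_insert_left:
  assumes "distinct (leaves (Nd l r))" "B \<subseteq> set (leaves r)" "x \<in> set (leaves l)" "restr B r = Some s"
  shows "restr (insert x B) (Nd l r) = Some (Nd (Lf x) s)"
proof -
  have "restr (insert x B) r = restr B r"
    using assms(1,3) by (intro restr_cong) auto
  moreover have "restr (insert x B) l = restr {x} l"
    using assms(1-3) by (intro restr_cong) auto
  ultimately show ?thesis
    using assms by (simp add: restr_singleton)
qed

lemma log2_add_le:
  fixes a b :: real
  assumes "0 < a" "0 \<le> b" "b \<le> a"
  shows "log 2 (a + b) \<le> 1 + log 2 a"
proof -
  have "log 2 (a + b) \<le> log 2 (2 * a)"
    using assms by simp
  also have "\<dots> = 1 + log 2 a"
    using assms(1) by (simp add: log_mult)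
  finally show ?thesis .
qed

definition combs_within :: "'a set \<Rightarrow> 'a tree \<Rightarrow> real \<Rightarrow> bool" where
  "combs_within U t b \<longleftrightarrow> (\<exists>A B sa sb. A \<subseteq> U \<and> B \<subseteq> U \<and> restr A t = Some sa \<and> left_comb sa \<and>
    restr B t = Some sb \<and> right_comb sb \<and> b \<le> card A + card B)"

lemma combs_within_mono: "combs_within U t b \<Longrightarrow> U \<subseteq> V \<Longrightarrow> c \<le> b \<Longrightarrow> combs_within V t c"
  unfolding combs_within_def by (meson order_trans)

lemma combs_within_Nd_left:
  assumes "distinct (leaves (Nd l r))" "U \<subseteq> set (leaves l)" "combs_within U l b"
  shows "combs_within U (Nd l r) b"
proof -
  have "restr A (Nd l r) = restr A l" if "A \<subseteq> U" for A
    using that assms(1,2) by (intro restr_Nd_left) auto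
  with assms(3) show ?thesis
    unfolding combs_within_def by (metis (no_types, lifting))
qed

lemma combs_within_Nd_right:
  assumes "distinct (leaves (Nd l r))" "U \<subseteq> set (leaves r)" "combs_within U r b"
  shows "combs_within U (Nd l r) b"
proof -
  have "restr A (Nd l r) = restr A r" if "A \<subseteq> U" for A
    using that assms(1,2) by (intro restr_Nd_right) auto
  with assms(3) show ?thesis
    unfolding combs_within_def by (metis (no_types, lifting))
qed

lemma combs_within_Nd_insert_right:
  assumes "distinct (leaves (Nd l r))" "U \<subseteq> set (leaves l)" "x \<in> set (leaves r)" "combs_within U l b"
  shows "combs_within (insert x U) (Nd l r) (b + 1)"
proof -
  obtain A B sa sb where AB: "A \<subseteq> U" "B \<subseteq> U" "restr A l = Some sa" "left_comb sa"
    "restr B l = Some sb" "right_comb sb" "b \<le> card A + card B"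
    using assms(4) unfolding combs_within_def by blast
  have "restr (insert x A) (Nd l r) = Some (Nd sa (Lf x))"
    using AB(1,3) assms(1-3) by (intro restr_Nd_insert_right) auto
  moreover have "restr B (Nd l r) = Some sb"
    using AB(2,5) assms(1,2) restr_Nd_left[of B r l] by auto
  moreover have "finite A" "x \<notin> A"
    using AB(1) assms(1-3) finite_subset[of A "set (leaves l)"] by auto
  then have "card (insert x A) = card A + 1"
    by simp
  ultimately show ?thesis
    unfolding combs_within_def using AB
    by (intro exI[of _ "insert x A"] exI[of _ B]) (auto simp del: restr.simps)
qed

lemma combs_within_Nd_insert_left:
  assumes "distinct (leaves (Nd l r))" "U \<subseteq> set (leaves r)" "x \<in> set (leaves l)" "combs_within U r b"
  shows "combs_within (insert x U) (Nd l r) (b + 1)"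
proof -
  obtain A B sa sb where AB: "A \<subseteq> U" "B \<subseteq> U" "restr A r = Some sa" "left_comb sa"
    "restr B r = Some sb" "right_comb sb" "b \<le> card A + card B"
    using assms(4) unfolding combs_within_def by blast
  have "restr (insert x B) (Nd l r) = Some (Nd (Lf x) sb)"
    using AB(2,5) assms(1-3) by (intro restr_Nd_insert_left) auto
  moreover have "restr A (Nd l r) = Some sa"
    using AB(1,3) assms(1,2) restr_Nd_right[of A l r] by auto
  moreover have "finite B" "x \<notin> B"
    using AB(2) assms(1-3) finite_subset[of B "set (leaves r)"] by auto
  then have "card (insert x B) = card B + 1"
    by simp
  ultimately show ?thesis
    unfolding combs_within_def using AB
    by (intro exI[of _ A] exI[of _ "insert x B"]) (auto simp del: restr.simps)
qed

text \<open>Descend into the child holding the larger part of U. A leaf taken from the smaller part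
  extends one of the two combs by one, which pays for halving U.\<close>

lemma combs_within_log_card:
  assumes "distinct (leaves t)" "U \<subseteq> set (leaves t)" "U \<noteq> {}"
  shows "combs_within U t (log 2 (card U) + 2)"
  using assms
proof (induction t arbitrary: U)
  case (Lf a)
  then have "U = {a}" by auto
  then show ?case
    unfolding combs_within_def by (intro exI[of _ "{a}"]) auto
next
  case (Nd l r)
  define Ul where "Ul = U \<inter> set (leaves l)"
  define Ur where "Ur = U \<inter> set (leaves r)"
  have U: "U = Ul \<union> Ur" "Ul \<inter> Ur = {}" "finite Ul" "finite Ur"
    using Nd.prems(1,2) by (auto simp: Ul_def Ur_def)
  consider "Ur = {}" | "Ul = {}" | "Ul \<noteq> {}" "Ur \<noteq> {}" "card Ur \<le> card Ul"
    | "Ul \<noteq> {}" "Ur \<noteq> {}" "card Ul < card Ur" by linarith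
  then show ?case
  proof cases
    case 1
    with U Nd.prems show ?thesis
      by (intro combs_within_Nd_left Nd.IH(1)) (auto simp: Ul_def)
  next
    case 2
    with U Nd.prems show ?thesis
      by (intro combs_within_Nd_right Nd.IH(2)) (auto simp: Ur_def)
  next
    case 3
    then obtain x where "x \<in> Ur" by blast
    with 3 Nd have "combs_within (insert x Ul) (Nd l r) (log 2 (card Ul) + 2 + 1)"
      by (intro combs_within_Nd_insert_right Nd.IH(1)) (auto simp: Ul_def Ur_def)
    moreover have "log 2 (card U) \<le> 1 + log 2 (card Ul)"
      using 3 U log2_add_le[of "card Ul" "card Ur"] by (simp add: card_Un_disjoint card_gt_0_iff)
    ultimately show ?thesis
      using \<open>x \<in> Ur\<close> U(1) by (elim combs_within_mono) auto
  next
    case 4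
    then obtain x where "x \<in> Ul" by blast
    with 4 Nd have "combs_within (insert x Ur) (Nd l r) (log 2 (card Ur) + 2 + 1)"
      by (intro combs_within_Nd_insert_left Nd.IH(2)) (auto simp: Ul_def Ur_def)
    moreover have "log 2 (card U) \<le> 1 + log 2 (card Ur)"
      using 4 U log2_add_le[of "card Ur" "card Ul"] by (simp add: card_Un_disjoint card_gt_0_iff add.commute)
    ultimately show ?thesis
      using \<open>x \<in> Ul\<close> U(1) by (elim combs_within_mono) auto
  qed
qed

lemma large_comb_restriction:
  fixes K :: real
  assumes "distinct (leaves t)" "U \<subseteq> set (leaves t)" "0 < K" "K \<le> card U"
  shows "\<exists>C s. C \<subseteq> U \<and> restr C t = Some s \<and> (left_comb s \<or> right_comb s) \<and> log 2 K / 2 + 1 \<le> card C"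
proof -
  have "U \<noteq> {}"
    using assms(3,4) by auto
  then obtain A B sa sb where AB: "A \<subseteq> U" "B \<subseteq> U" "restr A t = Some sa" "left_comb sa"
    "restr B t = Some sb" "right_comb sb" "log 2 (card U) + 2 \<le> card A + card B"
    using combs_within_log_card[OF assms(1,2)] unfolding combs_within_def by blast
  have "log 2 K \<le> log 2 (card U)"
    using assms(3,4) by simp
  with AB(7) consider "log 2 K / 2 + 1 \<le> card A" | "log 2 K / 2 + 1 \<le> card B"
    by linarith
  then show ?thesis
  proof cases
    case 1
    with AB show ?thesis by (intro exI[of _ A] exI[of _ sa]) simp
  next
    case 2
    with AB show ?thesis by (intro exI[of _ B] exI[of _ sb]) simp
  qed
qed

lemma distinct_leaves_Qs: "distinct (leaves t) \<Longrightarrow> Q \<in> set (Qs t) \<Longrightarrow> distinct (leaves Q)"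
  by (metis concat_leaves_Qs distinct_concat_iff image_eqI set_map)

lemma distinct_leaves_Rs: "distinct (leaves t) \<Longrightarrow> R \<in> set (Rs t) \<Longrightarrow> distinct (leaves R)"
  by (metis concat_leaves_Rs distinct_concat_iff image_eqI set_map)

definition fiber :: "nat \<Rightarrow> (nat \<Rightarrow> nat) \<Rightarrow> nat \<Rightarrow> nat set" where
  "fiber N f a = {i. i < N \<and> f i = a}"

lemma finite_fiber [simp]: "finite (fiber N f a)"
  by (simp add: fiber_def)

lemma fiber_subset_lessThan: "fiber N f a \<subseteq> {..<N}"
  by (auto simp: fiber_def)

lemma mono_on_eq_between:
  fixes f :: "nat \<Rightarrow> 'a :: order"
  assumes "mono_on {..<N} f" "i \<le> j" "j \<le> k" "k < N" "f i = f k"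
  shows "f j = f i"
proof -
  have "j < N"
    using assms(3,4) by (rule le_less_trans)
  moreover have "i < N"
    using assms(2) \<open>j < N\<close> by (rule le_less_trans)
  ultimately have "f i \<le> f j" "f j \<le> f k"
    using assms(2-4) by (auto intro!: mono_onD[OF assms(1)])
  with assms(5) show ?thesis by simp
qed

lemma fiber_after:
  assumes "mono_on {..<N} f" "e \<le> i" "i < N" "f i \<noteq> f e" "q \<in> fiber N f (f i)"
  shows "e < q"
proof (rule ccontr)
  assume "\<not> e < q"
  with assms(2,3,5) have "f q \<le> f e" "f e \<le> f i"
    using mono_onD[OF assms(1), of q e] mono_onD[OF assms(1), of e i] by (auto simp: fiber_def)
  moreover have "f q = f i"
    using assms(5) by (simp add: fiber_def)
  ultimately show False
    using assms(4) by simp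
qed

lemma fiber_before:
  assumes "mono_on {..<N} f" "i \<le> s" "s < N" "f i \<noteq> f s" "p \<in> fiber N f (f i)"
  shows "p < s"
proof (rule ccontr)
  assume "\<not> p < s"
  with assms(2,3,5) have "f i \<le> f s" "f s \<le> f p"
    using mono_onD[OF assms(1), of i s] mono_onD[OF assms(1), of s p] by (auto simp: fiber_def)
  moreover have "f p = f i"
    using assms(5) by (simp add: fiber_def)
  ultimately show False
    using assms(4) by simp
qed

lemma card_Union_list_le: "card (\<Union> (set Ss)) \<le> sum_list (map card Ss)"
  by (induction Ss) (auto intro: order_trans[OF card_Un_le])

lemma card_le_card_image_mult:
  fixes m :: real
  assumes "finite S" "\<And>y. y \<in> f ` S \<Longrightarrow> card {x \<in> S. f x = y} \<le> m"
  shows "card S \<le> card (f ` S) * m"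
proof -
  have "(\<Union>y \<in> f ` S. {x \<in> S. f x = y}) = S"
    by auto
  moreover have "card (\<Union>y \<in> f ` S. {x \<in> S. f x = y}) \<le> (\<Sum>y \<in> f ` S. card {x \<in> S. f x = y})"
    using assms(1) by (intro card_UN_le) simp
  ultimately have "real (card S) \<le> (\<Sum>y \<in> f ` S. real (card {x \<in> S. f x = y}))"
    by (metis of_nat_le_iff of_nat_sum)
  also have "\<dots> \<le> (\<Sum>y \<in> f ` S. m)"
    by (rule sum_mono) (rule assms(2))
  finally show ?thesis by simp
qed

lemma split_at_first_fresh_index:
  fixes f g :: "nat \<Rightarrow> nat"
  assumes "mono_on {u..<v} f" "mono_on {u..<v} g" "u < v"
  obtains u' where "u < u'" "u' \<le> v"
    "{u..<u'} \<subseteq> {j \<in> {u..<v}. f j = f u} \<union> {j \<in> {u..<v}. g j = g u}"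
    "\<And>j. j \<in> {u'..<v} \<Longrightarrow> f u < f j \<and> g u < g j"
proof -
  define P where "P j \<longleftrightarrow> u \<le> j \<and> (j = v \<or> f u < f j \<and> g u < g j)" for j
  define u' where "u' = (LEAST j. P j)"
  have "P v"
    using assms(3) by (simp add: P_def)
  then have "P u'"
    unfolding u'_def by (rule LeastI)
  moreover have "u' \<le> v"
    using Least_le[of P v] \<open>P v\<close> by (simp add: u'_def)
  ultimately have u': "u < u'" "u' \<le> v"
    using assms(3) by (auto simp: P_def le_less)
  have share: "f j = f u \<or> g j = g u" if "j \<in> {u..<u'}" for j
  proof -
    have "\<not> P j"
      using that not_less_Least[of j P] by (simp add: u'_def)
    moreover have "f u \<le> f j" "g u \<le> g j"
      using that u' assms(1,2) by (auto intro: mono_onD)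
    ultimately show ?thesis
      using that u' by (auto simp: P_def)
  qed
  have initial: "{u..<u'} \<subseteq> {j \<in> {u..<v}. f j = f u} \<union> {j \<in> {u..<v}. g j = g u}"
  proof
    fix j assume "j \<in> {u..<u'}"
    with share[of j] u' show "j \<in> {j \<in> {u..<v}. f j = f u} \<union> {j \<in> {u..<v}. g j = g u}"
      by auto
  qed
  have later: "f u < f j \<and> g u < g j" if "j \<in> {u'..<v}" for j
  proof -
    have "f u < f u'" "g u < g u'"
      using \<open>P u'\<close> that by (auto simp: P_def)
    moreover have "f u' \<le> f j" "g u' \<le> g j"
      using that u' assms(1,2) by (auto intro: mono_onD)
    ultimately show ?thesis by simp
  qed
  show thesis
    by (rule that[OF u' initial later])
qed

text \<open>Keep the first index u and recurse beyond the indices sharing its f- or its g-value;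
  there are at most 2B of them.\<close>

lemma greedy_bi_injective:
  fixes f g :: "nat \<Rightarrow> nat" and B :: real
  assumes "mono_on {u..<v} f" "mono_on {u..<v} g"
    and "\<And>i. i \<in> {u..<v} \<Longrightarrow>
      card {j \<in> {u..<v}. f j = f i} \<le> B \<and> card {j \<in> {u..<v}. g j = g i} \<le> B"
  shows "\<exists>A \<subseteq> {u..<v}. inj_on f A \<and> inj_on g A \<and> real (v - u) \<le> 2 * B * card A"
  using assms
proof (induction "v - u" arbitrary: u rule: less_induct)
  case less
  show ?case
  proof (cases "u < v")
    case False
    then show ?thesis by (intro exI[of _ "{}"]) auto
  next
    case True
    obtain u' where u': "u < u'" "u' \<le> v"
      and initial: "{u..<u'} \<subseteq> {j \<in> {u..<v}. f j = f u} \<union> {j \<in> {u..<v}. g j = g u}"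
      and later: "\<And>j. j \<in> {u'..<v} \<Longrightarrow> f u < f j \<and> g u < g j"
      using split_at_first_fresh_index[OF less.prems(1,2) True] by blast
    have "u' - u \<le> card ({j \<in> {u..<v}. f j = f u} \<union> {j \<in> {u..<v}. g j = g u})"
      using card_mono[OF _ initial] by simp
    also have "\<dots> \<le> card {j \<in> {u..<v}. f j = f u} + card {j \<in> {u..<v}. g j = g u}"
      by (rule card_Un_le)
    finally have "real (u' - u) \<le> card {j \<in> {u..<v}. f j = f u} + card {j \<in> {u..<v}. g j = g u}"
      by (metis of_nat_add of_nat_le_iff)
    with less.prems(3)[of u] True have segment: "real (u' - u) \<le> 2 * B"
      by simp
    have "v - u' < v - u"
      using u' True by (simp add: diff_less_mono2)
    moreover have "mono_on {u'..<v} f" "mono_on {u'..<v} g"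
      using less.prems(1,2) u' by (auto intro: mono_on_subset)
    moreover have "card {j \<in> {u'..<v}. f j = f i} \<le> B \<and> card {j \<in> {u'..<v}. g j = g i} \<le> B"
      if "i \<in> {u'..<v}" for i
      using less.prems(3)[of i] that u'
        card_mono[of "{j \<in> {u..<v}. f j = f i}" "{j \<in> {u'..<v}. f j = f i}"]
        card_mono[of "{j \<in> {u..<v}. g j = g i}" "{j \<in> {u'..<v}. g j = g i}"]
      by force
    ultimately obtain A where A: "A \<subseteq> {u'..<v}" "inj_on f A" "inj_on g A"
      "real (v - u') \<le> 2 * B * card A"
      using less.hyps[of u'] by blast
    have "u \<notin> A" "finite A"
      using A(1) u' by (auto intro: finite_subset)
    moreover have "f u \<notin> f ` A" "g u \<notin> g ` A"
      using later A(1) by fastforce+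
    ultimately have "inj_on f (insert u A)" "inj_on g (insert u A)"
      "real (card (insert u A)) = card A + 1"
      using A(2,3) by auto
    moreover have "real (v - u) = real (v - u') + real (u' - u)"
      using u' by simp
    ultimately show ?thesis
      using A segment u' by (intro exI[of _ "insert u A"]) (auto simp: algebra_simps)
  qed
qed

lemma interval_length_le:
  fixes f g :: "nat \<Rightarrow> nat" and B L :: real
  assumes "mono_on {u..<v} f" "mono_on {u..<v} g" "0 \<le> B"
    and "\<And>i. i \<in> {u..<v} \<Longrightarrow>
      card {j \<in> {u..<v}. f j = f i} \<le> B \<and> card {j \<in> {u..<v}. g j = g i} \<le> B"
    and "\<And>A. A \<subseteq> {u..<v} \<Longrightarrow> inj_on f A \<Longrightarrow> inj_on g A \<Longrightarrow> card A < L"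
  shows "real (v - u) \<le> 2 * B * L"
proof -
  obtain A where A: "A \<subseteq> {u..<v}" "inj_on f A" "inj_on g A" "real (v - u) \<le> 2 * B * card A"
    using greedy_bi_injective[OF assms(1,2,4)] by blast
  moreover have "2 * B * card A \<le> 2 * B * L"
    using assms(3) assms(5)[OF A(1-3)] by (intro mult_left_mono) auto
  ultimately show ?thesis by linarith
qed

lemma card_fiber_interval_le:
  "v \<le> N \<Longrightarrow> card {j \<in> {u..<v}. f j = f i} \<le> card (fiber N f (f i))"
  by (rule card_mono) (auto simp: fiber_def)

lemma interval_length_le_small_fibers:
  fixes f g :: "nat \<Rightarrow> nat" and M L :: real
  assumes "mono_on {..<N} f" "mono_on {..<N} g" "v \<le> N" "0 \<le> M"
    and "\<And>i. i \<in> {u..<v} \<Longrightarrow> card (fiber N f (f i)) < M \<and> card (fiber N g (g i)) < M"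
    and "\<And>A. A \<subseteq> {..<N} \<Longrightarrow> inj_on f A \<Longrightarrow> inj_on g A \<Longrightarrow> card A < L"
  shows "real (v - u) \<le> 2 * M * L"
proof (rule interval_length_le)
  show "mono_on {u..<v} f" "mono_on {u..<v} g"
    using assms(1-3) by (auto intro: mono_on_subset)
  show "card {j \<in> {u..<v}. f j = f i} \<le> M \<and> card {j \<in> {u..<v}. g j = g i} \<le> M"
    if "i \<in> {u..<v}" for i
    using assms(3) assms(5)[OF that] card_fiber_interval_le[of v N u f i]
      card_fiber_interval_le[of v N u g i] by linarith
  show "card A < L" if "A \<subseteq> {u..<v}" "inj_on f A" "inj_on g A" for A
    using that assms(3) by (intro assms(6)) auto
qed (use assms in auto)

lemma interval_length_le_few_blocks:
  fixes f g :: "nat \<Rightarrow> nat" and \<alpha> K L :: real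
  assumes "mono_on {..<N} f" "mono_on {..<N} g" "v \<le> N" "0 \<le> \<alpha>" "1 \<le> K"
    and "\<And>i. i \<in> {u..<v} \<Longrightarrow> card (fiber N f (f i)) < \<alpha>"
    and "\<And>c. card (f ` fiber N g c) < K"
    and "\<And>A. A \<subseteq> {..<N} \<Longrightarrow> inj_on f A \<Longrightarrow> inj_on g A \<Longrightarrow> card A < L"
  shows "real (v - u) \<le> 2 * (K * \<alpha>) * L"
proof (rule interval_length_le)
  show "mono_on {u..<v} f" "mono_on {u..<v} g"
    using assms(1-3) by (auto intro: mono_on_subset)
  fix i assume i: "i \<in> {u..<v}"
  have "card {j \<in> {u..<v}. f j = f i} \<le> \<alpha>"
    using assms(3) assms(6)[OF i] card_fiber_interval_le[of v N u f i] by linarith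
  also have "\<alpha> \<le> K * \<alpha>"
    using assms(4,5) by (simp add: mult_le_cancel_right1)
  finally show "card {j \<in> {u..<v}. f j = f i} \<le> K * \<alpha> \<and> card {j \<in> {u..<v}. g j = g i} \<le> K * \<alpha>"
  proof (rule conjI)
    define S where "S = {j \<in> {u..<v}. g j = g i}"
    have image: "card (f ` S) \<le> card (f ` fiber N g (g i))"
      using assms(3) by (intro card_mono) (auto simp: S_def fiber_def)
    have "card S \<le> card (f ` S) * \<alpha>"
    proof (rule card_le_card_image_mult)
      fix y assume "y \<in> f ` S"
      then obtain x where "x \<in> S" "y = f x" by blast
      then have "card {x \<in> S. f x = y} \<le> card (fiber N f (f x))"
        using assms(3) by (intro card_mono) (auto simp: S_def fiber_def)
      with assms(6)[of x] \<open>x \<in> S\<close> show "card {x \<in> S. f x = y} \<le> \<alpha>"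
        by (auto simp: S_def)
    qed (simp add: S_def)
    also have "\<dots> \<le> K * \<alpha>"
      using image assms(4) assms(7)[of "g i"] by (intro mult_right_mono) auto
    finally show "card {j \<in> {u..<v}. g j = g i} \<le> K * \<alpha>"
      by (simp add: S_def)
  qed
next
  show "card A < L" if "A \<subseteq> {u..<v}" "inj_on f A" "inj_on g A" for A
    using that assms(3) by (intro assms(8)) auto
qed (use assms in auto)

lemma lessThan_subset_blocks:
  fixes f g :: "nat \<Rightarrow> nat"
  assumes "mono_on {..<N} f" "mono_on {..<N} g"
    and "P1 \<le> e1" "e1 \<le> e2" "e2 < N" "g e1 = g P1" "f e2 = f e1"
    and "v \<le> s2" "s2 \<le> P2" "P2 < N" "g v = g s2" "f s2 = f P2"
  shows "{..<N} \<subseteq> \<Union> (set [{..<P1}, fiber N g (g P1), fiber N f (f e1), {Suc e2..<v},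
    fiber N g (g s2), fiber N f (f P2), {Suc P2..<N}])"
proof
  fix i assume "i \<in> {..<N}"
  then have i: "i < N" by simp
  consider "i < P1" | "P1 \<le> i" "i \<le> e1" | "e1 \<le> i" "i \<le> e2" | "e2 < i" "i < v"
    | "v \<le> i" "i \<le> s2" | "s2 \<le> i" "i \<le> P2" | "P2 < i"
    by linarith
  then show "i \<in> \<Union> (set [{..<P1}, fiber N g (g P1), fiber N f (f e1), {Suc e2..<v},
    fiber N g (g s2), fiber N f (f P2), {Suc P2..<N}])"
  proof cases
    case 2
    then have "g i = g P1"
      using mono_on_eq_between[OF assms(2), of P1 i e1] assms by simp
    with i show ?thesis by (simp add: fiber_def)
  next
    case 3
    then have "f i = f e1"
      using mono_on_eq_between[OF assms(1), of e1 i e2] assms by simp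
    with i show ?thesis by (simp add: fiber_def)
  next
    case 5
    then have "g i = g s2"
      using mono_on_eq_between[OF assms(2), of v i s2] assms by simp
    with i show ?thesis by (simp add: fiber_def)
  next
    case 6
    then have "f i = f P2"
      using mono_on_eq_between[OF assms(1), of s2 i P2] assms by simp
    with i show ?thesis by (simp add: fiber_def)
  qed (use i in auto)
qed

lemma fiber_Max:
  assumes "i < N"
  shows "Max (fiber N f (f i)) < N" "f (Max (fiber N f (f i))) = f i" "i \<le> Max (fiber N f (f i))"
proof -
  have "i \<in> fiber N f (f i)"
    using assms by (simp add: fiber_def)
  moreover from this have "Max (fiber N f (f i)) \<in> fiber N f (f i)"
    by (intro Max_in) auto
  ultimately show "Max (fiber N f (f i)) < N" "f (Max (fiber N f (f i))) = f i" "i \<le> Max (fiber N f (f i))"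
    by (auto simp: fiber_def)
qed

lemma fiber_Min:
  assumes "i < N"
  shows "Min (fiber N f (f i)) < N" "f (Min (fiber N f (f i))) = f i" "Min (fiber N f (f i)) \<le> i"
proof -
  have "i \<in> fiber N f (f i)"
    using assms by (simp add: fiber_def)
  moreover from this have "Min (fiber N f (f i)) \<in> fiber N f (f i)"
    by (intro Min_in) auto
  ultimately show "Min (fiber N f (f i)) < N" "f (Min (fiber N f (f i))) = f i" "Min (fiber N f (f i)) \<le> i"
    by (auto simp: fiber_def)
qed

lemma length_le_sum_blocks:
  fixes f g :: "nat \<Rightarrow> nat"
  assumes "mono_on {..<N} f" "mono_on {..<N} g"
    and "P1 \<le> e1" "e1 \<le> e2" "e2 < N" "g e1 = g P1" "f e2 = f e1"
    and "v \<le> s2" "s2 \<le> P2" "P2 < N" "g v = g s2" "f s2 = f P2"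
  shows "real N \<le> real P1 + card (fiber N g (g P1)) + card (fiber N f (f e1)) + real (v - Suc e2)
    + card (fiber N g (g s2)) + card (fiber N f (f P2)) + real (N - Suc P2)"
proof -
  let ?pieces = "[{..<P1}, fiber N g (g P1), fiber N f (f e1), {Suc e2..<v},
    fiber N g (g s2), fiber N f (f P2), {Suc P2..<N}]"
  have "card {..<N} \<le> card (\<Union> (set ?pieces))"
    using lessThan_subset_blocks[OF assms] by (intro card_mono) simp_all
  also have "\<dots> \<le> sum_list (map card ?pieces)"
    by (rule card_Union_list_le)
  finally show ?thesis
    by simp
qed

lemma first_large_fiber:
  fixes f g :: "nat \<Rightarrow> nat" and \<alpha> K L :: real
  assumes "mono_on {..<N} f" "mono_on {..<N} g" "0 \<le> \<alpha>" "1 \<le> K"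
    and "\<And>c. card (f ` fiber N g c) < K"
    and "\<And>A. A \<subseteq> {..<N} \<Longrightarrow> inj_on f A \<Longrightarrow> inj_on g A \<Longrightarrow> card A < L"
    and "2 * (K * \<alpha>) * L < N"
  obtains P where "P < N" "\<alpha> \<le> card (fiber N f (f P))" "real P \<le> 2 * (K * \<alpha>) * L"
proof -
  define S where "S = {i. i < N \<and> \<alpha> \<le> card (fiber N f (f i))}"
  have "finite S"
    by (simp add: S_def)
  have bound: "real (v - u) \<le> 2 * (K * \<alpha>) * L" if uv: "v \<le> N" "\<And>i. i \<in> {u..<v} \<Longrightarrow> i \<notin> S" for u v
  proof (rule interval_length_le_few_blocks[OF assms(1,2) uv(1) assms(3,4) _ assms(5,6)])
    fix i assume "i \<in> {u..<v}"
    with uv have "i \<notin> S" "i < N" by auto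
    then show "card (fiber N f (f i)) < \<alpha>" by (simp add: S_def not_le)
  qed
  have "S \<noteq> {}"
  proof
    assume "S = {}"
    with bound[of N 0] assms(7) show False by simp
  qed
  with \<open>finite S\<close> have "Min S \<in> S"
    by simp
  then have P: "Min S < N" "\<alpha> \<le> card (fiber N f (f (Min S)))"
    by (simp_all add: S_def)
  have "i \<notin> S" if "i < Min S" for i
  proof
    assume "i \<in> S"
    with \<open>finite S\<close> have "Min S \<le> i" by simp
    with that show False by simp
  qed
  with P(1) have "real (Min S) \<le> 2 * (K * \<alpha>) * L"
    using bound[of "Min S" 0] by simp
  with P show thesis
    by (rule that)
qed

lemma last_large_fiber:
  fixes f g :: "nat \<Rightarrow> nat" and \<alpha> K L :: real
  assumes "mono_on {..<N} f" "mono_on {..<N} g" "0 \<le> \<alpha>" "1 \<le> K"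
    and "\<And>c. card (f ` fiber N g c) < K"
    and "\<And>A. A \<subseteq> {..<N} \<Longrightarrow> inj_on f A \<Longrightarrow> inj_on g A \<Longrightarrow> card A < L"
    and "2 * (K * \<alpha>) * L < N"
  obtains P where "P < N" "\<alpha> \<le> card (fiber N f (f P))" "real (N - Suc P) \<le> 2 * (K * \<alpha>) * L"
proof -
  define S where "S = {i. i < N \<and> \<alpha> \<le> card (fiber N f (f i))}"
  have "finite S"
    by (simp add: S_def)
  have bound: "real (v - u) \<le> 2 * (K * \<alpha>) * L" if uv: "v \<le> N" "\<And>i. i \<in> {u..<v} \<Longrightarrow> i \<notin> S" for u v
  proof (rule interval_length_le_few_blocks[OF assms(1,2) uv(1) assms(3,4) _ assms(5,6)])
    fix i assume "i \<in> {u..<v}"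
    with uv have "i \<notin> S" "i < N" by auto
    then show "card (fiber N f (f i)) < \<alpha>" by (simp add: S_def not_le)
  qed
  have "S \<noteq> {}"
  proof
    assume "S = {}"
    with bound[of N 0] assms(7) show False by simp
  qed
  with \<open>finite S\<close> have "Max S \<in> S"
    by simp
  then have P: "Max S < N" "\<alpha> \<le> card (fiber N f (f (Max S)))"
    by (simp_all add: S_def)
  have "i \<notin> S" if "Suc (Max S) \<le> i" for i
  proof
    assume "i \<in> S"
    with \<open>finite S\<close> have "i \<le> Max S" by simp
    with that show False by simp
  qed
  then have "real (N - Suc (Max S)) \<le> 2 * (K * \<alpha>) * L"
    using bound[of N "Suc (Max S)"] by simp
  with P show thesis
    by (rule that)
qed

lemma fibers_between_separated:
  fixes f g :: "nat \<Rightarrow> nat"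
  assumes "mono_on {..<N} f" "mono_on {..<N} g" "e1 < N" "s2 < N"
    and "\<forall>p \<in> fiber N g c. p \<le> e1" "\<forall>j \<in> fiber N f (f e1). j \<le> e2"
    and "\<forall>q \<in> fiber N f a. s2 \<le> q" "\<forall>j \<in> fiber N g (g s2). v \<le> j"
    and "e2 < i" "i < v"
  shows "\<forall>p \<in> fiber N g c. \<forall>q \<in> fiber N f (f i). p < q"
    and "\<forall>p \<in> fiber N g (g i). \<forall>q \<in> fiber N f a. p < q"
proof -
  have "e1 \<le> e2" "v \<le> s2"
    using assms(3-8) by (auto simp: fiber_def)
  with assms(4,9,10) have i: "e1 \<le> i" "i \<le> s2" "i < N"
    by linarith+
  have "f i \<noteq> f e1"
    using assms(6,9) i(3) by (auto simp: fiber_def)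
  then show "\<forall>p \<in> fiber N g c. \<forall>q \<in> fiber N f (f i). p < q"
    using assms(5) fiber_after[OF assms(1) i(1,3)] by fastforce
  have "g i \<noteq> g s2"
    using assms(8,10) i(3) by (auto simp: fiber_def)
  then show "\<forall>p \<in> fiber N g (g i). \<forall>q \<in> fiber N f a. p < q"
    using assms(7) fiber_before[OF assms(2) i(2) assms(4)] by fastforce
qed

text \<open>If none of the four configurations occurs, split the indices at the first large g-block and the
  last large f-block into seven pieces: two end intervals, in which all blocks are small and meet few
  blocks of the other labelling, four single blocks, and a middle interval. A block of the middle
  interval lies after the first large g-block and before the last large f-block, so it is smaller than M.
  All seven pieces together are too short to cover the N indices.\<close>

lemma monotone_labellings_structure:
  fixes f g :: "nat \<Rightarrow> nat" and \<alpha> M K L :: real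
  assumes mono: "mono_on {..<N} f" "mono_on {..<N} g"
    and small: "\<And>a. card (fiber N f a) \<le> N / 20" "\<And>c. card (fiber N g c) \<le> N / 20"
    and pos: "0 < \<alpha>" "0 < M" "1 \<le> K"
    and long: "4 * (K * \<alpha>) * L + N / 5 + 2 * M * L < N"
  obtains (separated) c a where "\<forall>p \<in> fiber N g c. \<forall>q \<in> fiber N f a. p < q"
      "\<alpha> \<le> card (fiber N g c) \<and> M \<le> card (fiber N f a) \<or> M \<le> card (fiber N g c) \<and> \<alpha> \<le> card (fiber N f a)"
    | (transversal) A where "A \<subseteq> {..<N}" "inj_on f A" "inj_on g A" "L \<le> card A"
    | (wide_g) c where "K \<le> card (f ` fiber N g c)"
    | (wide_f) a where "K \<le> card (g ` fiber N f a)"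
proof (rule ccontr)
  assume none: "\<not> thesis"
  have sep_f: "card (fiber N f a) < M"
    if "\<forall>p \<in> fiber N g c. \<forall>q \<in> fiber N f a. p < q" "\<alpha> \<le> card (fiber N g c)" for c a
    using separated[OF that(1)] that(2) none by force
  have sep_g: "card (fiber N g c) < M"
    if "\<forall>p \<in> fiber N g c. \<forall>q \<in> fiber N f a. p < q" "\<alpha> \<le> card (fiber N f a)" for c a
    using separated[OF that(1)] that(2) none by force
  have no_transversal: "card A < L" if "A \<subseteq> {..<N}" "inj_on f A" "inj_on g A" for A
    using transversal[OF that] none by force
  have few_g: "card (f ` fiber N g c) < K" for c
    using wide_g[of c] none by (meson not_le)
  have few_f: "card (g ` fiber N f a) < K" for a
    using wide_f[of a] none by (meson not_le)
  have "0 < L"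
    using no_transversal[of "{}"] by simp
  with pos have KaL_nonneg: "0 \<le> K * \<alpha> * L" and "0 \<le> M * L"
    by simp_all
  with long have short: "2 * (K * \<alpha>) * L < N"
    by simp
  have no_transversal_swapped: "card A < L" if "A \<subseteq> {..<N}" "inj_on g A" "inj_on f A" for A
    using no_transversal that by blast
  obtain P1 where P1: "P1 < N" "\<alpha> \<le> card (fiber N g (g P1))" "real P1 \<le> 2 * (K * \<alpha>) * L"
    by (rule first_large_fiber[OF mono(2,1) _ pos(3) few_f no_transversal_swapped short]) (use pos(1) in auto)
  obtain P2 where P2: "P2 < N" "\<alpha> \<le> card (fiber N f (f P2))" "real (N - Suc P2) \<le> 2 * (K * \<alpha>) * L"
    by (rule last_large_fiber[OF mono _ pos(3) few_g no_transversal short]) (use pos(1) in auto)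
  define e1 where "e1 = Max (fiber N g (g P1))"
  define e2 where "e2 = Max (fiber N f (f e1))"
  define s2 where "s2 = Min (fiber N f (f P2))"
  define v where "v = Min (fiber N g (g s2))"
  have e1: "e1 < N" "g e1 = g P1" "P1 \<le> e1"
    using fiber_Max[OF P1(1), of g] by (simp_all add: e1_def)
  have e2: "e2 < N" "f e2 = f e1" "e1 \<le> e2"
    using fiber_Max[OF e1(1), of f] by (simp_all add: e2_def)
  have s2: "s2 < N" "f s2 = f P2" "s2 \<le> P2"
    using fiber_Min[OF P2(1), of f] by (simp_all add: s2_def)
  have v: "v < N" "g v = g s2" "v \<le> s2"
    using fiber_Min[OF s2(1), of g] by (simp_all add: v_def)
  have ends: "\<forall>p \<in> fiber N g (g P1). p \<le> e1" "\<forall>j \<in> fiber N f (f e1). j \<le> e2"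
    "\<forall>q \<in> fiber N f (f P2). s2 \<le> q" "\<forall>j \<in> fiber N g (g s2). v \<le> j"
    by (simp_all add: e1_def e2_def s2_def v_def)
  have "card (fiber N f (f i)) < M \<and> card (fiber N g (g i)) < M" if "i \<in> {Suc e2..<v}" for i
  proof
    have i: "e2 < i" "i < v"
      using that by auto
    show "card (fiber N f (f i)) < M"
      using sep_f[OF fibers_between_separated(1)[OF mono e1(1) s2(1) ends i] P1(2)] .
    show "card (fiber N g (g i)) < M"
      using sep_g[OF fibers_between_separated(2)[OF mono e1(1) s2(1) ends i] P2(2)] .
  qed
  then have middle: "real (v - Suc e2) \<le> 2 * M * L"
    using v(1) pos(2) by (intro interval_length_le_small_fibers[OF mono _ _ _ no_transversal]) auto

  have "real N \<le> real P1 + card (fiber N g (g P1)) + card (fiber N f (f e1)) + real (v - Suc e2)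
      + card (fiber N g (g s2)) + card (fiber N f (f P2)) + real (N - Suc P2)"
    by (rule length_le_sum_blocks[OF mono e1(3) e2(3) e2(1) e1(2) e2(2) v(3) s2(3) P2(1) v(2) s2(2)])
  with small(1)[of "f e1"] small(1)[of "f P2"] small(2)[of "g P1"] small(2)[of "g s2"]
    P1(3) P2(3) middle long KaL_nonneg show False
    by simp
qed

fun block_index :: "'a list list \<Rightarrow> nat \<Rightarrow> nat" where
  "block_index [] i = 0"
| "block_index (xs # xss) i = (if i < length xs then 0 else Suc (block_index xss (i - length xs)))"

lemma nth_concat_block_index:
  "i < length (concat xss) \<Longrightarrow>
    block_index xss i < length xss \<and> concat xss ! i \<in> set (xss ! block_index xss i)"
  by (induction xss arbitrary: i) (auto simp: nth_append)

lemma mono_block_index: "mono (block_index xss)"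
proof (rule monoI)
  show "block_index xss i \<le> block_index xss j" if "i \<le> j" for i j
    using that by (induction xss arbitrary: i j) (auto simp: diff_le_mono)
qed

lemma block_index_eqI:
  assumes "distinct (concat xss)" "i < length (concat xss)" "b < length xss"
    and "concat xss ! i \<in> set (xss ! b)"
  shows "block_index xss i = b"
  using assms
proof (induction xss arbitrary: i b)
  case (Cons xs xss)
  show ?case
  proof (cases "i < length xs")
    case True
    with Cons.prems have "concat (xs # xss) ! i \<in> set xs - set (concat xss)"
      by (auto simp: nth_append disjoint_iff)
    with Cons.prems(3,4) True show ?thesis
      by (cases b) auto
  next
    case False
    with Cons.prems(2) have "concat xss ! (i - length xs) \<in> set (concat xss)"
      by (intro nth_mem) simp
    with Cons.prems(1) False have "concat (xs # xss) ! i \<in> set (concat xss) - set xs"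
      by (auto simp: nth_append disjoint_iff)
    with Cons.prems False show ?thesis
      by (cases b) (auto simp: nth_append intro: Cons.IH)
  qed
qed simp

lemma nth_concat_in_take:
  assumes "i < length (concat xss)" "block_index xss i < b"
  shows "concat xss ! i \<in> set (concat (take b xss))"
proof -
  let ?j = "block_index xss i"
  have j: "?j < length xss" "concat xss ! i \<in> set (xss ! ?j)"
    using nth_concat_block_index[OF assms(1)] by simp_all
  then have "take b xss ! ?j \<in> set (take b xss)"
    using assms(2) by (intro nth_mem) simp
  with j assms(2) show ?thesis by auto
qed

lemma nth_concat_in_drop:
  assumes "i < length (concat xss)" "b < block_index xss i"
  shows "concat xss ! i \<in> set (concat (drop (Suc b) xss))"
proof -
  let ?j = "block_index xss i"
  have j: "?j < length xss" "concat xss ! i \<in> set (xss ! ?j)"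
    using nth_concat_block_index[OF assms(1)] by simp_all
  then have "drop (Suc b) xss ! (?j - Suc b) \<in> set (drop (Suc b) xss)"
    using assms(2) by (intro nth_mem) simp
  with j assms(2) show ?thesis by auto
qed

lemma card_fiber_block_index_le:
  fixes s :: real
  assumes "distinct (concat xss)" "0 \<le> s" "\<And>xs. xs \<in> set xss \<Longrightarrow> length xs \<le> s"
  shows "card (fiber (length (concat xss)) (block_index xss) b) \<le> s"
proof (cases "b < length xss")
  case True
  let ?F = "fiber (length (concat xss)) (block_index xss) b"
  have "inj_on ((!) (concat xss)) ?F"
    using assms(1) by (auto simp: inj_on_def fiber_def nth_eq_iff_index_eq)
  moreover have "(!) (concat xss) ` ?F \<subseteq> set (xss ! b)"
    using nth_concat_block_index by (fastforce simp: fiber_def)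
  ultimately have "card ?F \<le> card (set (xss ! b))"
    by (metis card_image card_mono finite_set)
  also have "\<dots> \<le> length (xss ! b)"
    by (rule card_length)
  finally show ?thesis
    using assms(3)[of "xss ! b"] True by simp
next
  case False
  then have "fiber (length (concat xss)) (block_index xss) b = {}"
    using nth_concat_block_index by (fastforce simp: fiber_def)
  with assms(2) show ?thesis by simp
qed

lemma length_filter_le_1_if_inj_on_block_index:
  assumes "distinct (concat xss)" "U \<subseteq> {..<length (concat xss)}" "inj_on (block_index xss) U"
    and "C \<subseteq> (!) (concat xss) ` U" "xs \<in> set xss"
  shows "length (filter (\<lambda>x. x \<in> C) xs) \<le> 1"
proof -
  obtain b where b: "b < length xss" "xs = xss ! b"
    using assms(5) by (metis in_set_conv_nth)
  have "distinct xs"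
    using assms(1,5) by (simp add: distinct_concat_iff)
  then have "length (filter (\<lambda>x. x \<in> C) xs) = card (set xs \<inter> C)"
    by (metis distinct_card distinct_filter set_filter Collect_conj_eq Collect_mem_eq)
  also have "card (set xs \<inter> C) \<le> Suc 0"
  proof -
    have "x = y" if "x \<in> set xs \<inter> C" "y \<in> set xs \<inter> C" for x y
    proof -
      from that assms(4) obtain i j where ij: "i \<in> U" "j \<in> U" "x = concat xss ! i" "y = concat xss ! j"
        "x \<in> set xs" "y \<in> set xs" by blast
      then have "block_index xss i = b" "block_index xss j = b"
        using assms(1,2) b by (auto intro: block_index_eqI)
      with ij assms(3) show "x = y"
        by (metis inj_onD)
    qed
    then show ?thesis
      by (simp add: card_le_Suc0_iff_eq)
  qed
  finally show ?thesis by simp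
qed

lemma log2_le_powr:
  fixes n :: real
  assumes "1 \<le> n"
  shows "log 2 n \<le> 9 * n powr (7/48)"
proof -
  define z where "z = n powr (7/48)"
  have z: "0 < z" "ln n = (48/7) * ln z"
    using assms by (simp_all add: z_def ln_powr)
  have "ln (z / 2) \<le> z / 2 - 1"
    using z(1) by (intro ln_le_minus_one) simp
  then have "ln z \<le> z / 2"
    using z(1) ln_2_less_1 by (simp add: ln_div)
  moreover have "1 / 2 \<le> ln (2::real)"
    using ln_le_minus_one[of "1/2 :: real"] by (simp add: ln_div)
  moreover have "z / 2 \<le> z * ln 2"
    using z(1) \<open>1 / 2 \<le> ln 2\<close> by simp
  ultimately have "ln z / ln 2 \<le> z"
    using ln_2_less_1 \<open>1 / 2 \<le> ln 2\<close> by (simp add: divide_le_eq)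
  then have "log 2 n \<le> (48/7) * z"
    by (simp add: log_def z(2))
  also have "\<dots> \<le> 9 * z"
    using z(1) by simp
  finally show ?thesis by (simp add: z_def)
qed

lemma parameters_bound:
  fixes n N :: real
  assumes "2 \<le> n" "n powr (1/4) \<le> N"
  shows "4 * (n powr (1/24) * n powr (1/16)) * (log 2 n / 48) + N / 5
    + 2 * (N / (10 * log 2 n)) * (log 2 n / 48) < N"
proof -
  have "0 < log 2 n" "0 < N"
    using assms by (auto intro: less_le_trans[of 0 "n powr (1/4)"])
  have "4 * (n powr (1/24) * n powr (1/16)) * (log 2 n / 48) = n powr (5/48) * log 2 n / 12"
    using assms(1) by (simp add: powr_add[symmetric])
  also have "\<dots> \<le> n powr (5/48) * (9 * n powr (7/48)) / 12"
    using log2_le_powr[of n] assms(1) by (intro divide_right_mono mult_left_mono) auto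
  also have "\<dots> = (3/4) * n powr (1/4)"
    using assms(1) by (simp add: powr_add[symmetric])
  also have "\<dots> \<le> (3/4) * N"
    using assms(2) by simp
  finally show ?thesis
    using \<open>0 < log 2 n\<close> \<open>0 < N\<close> by (simp add: field_simps)
qed

locale common_leaf_order =
  fixes T1 T2 :: "'a tree"
  assumes distinct_leaves: "distinct (leaves T1)"
    and same_leaves: "leaves T1 = leaves T2"
begin

abbreviation "zs \<equiv> leaves T1"
abbreviation "N \<equiv> length (leaves T1)"

text \<open>The i-th leaf of the common leaf sequence lies in the block Q_(qblock i) of T1
  and in the block R_(rblock i) of T2 (counting from 0).\<close>

definition qblock :: "nat \<Rightarrow> nat" where
  "qblock = block_index (map leaves (Qs T1))"

definition rblock :: "nat \<Rightarrow> nat" where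
  "rblock = block_index (map leaves (Rs T2))"

lemma concat_leaves_Rs_T2: "concat (map leaves (Rs T2)) = zs"
  by (simp add: concat_leaves_Rs same_leaves)

lemma mono_qblock: "mono_on {..<N} qblock"
  using mono_block_index by (auto simp: qblock_def mono_on_def monoD)

lemma mono_rblock: "mono_on {..<N} rblock"
  using mono_block_index by (auto simp: rblock_def mono_on_def monoD)

lemma qblock: "i < N \<Longrightarrow> qblock i < length (Qs T1) \<and> zs ! i \<in> set (leaves (Qs T1 ! qblock i))"
  using nth_concat_block_index[of i "map leaves (Qs T1)"] by (auto simp: qblock_def concat_leaves_Qs)

lemma rblock: "i < N \<Longrightarrow> rblock i < length (Rs T2) \<and> zs ! i \<in> set (leaves (Rs T2 ! rblock i))"
  using nth_concat_block_index[of i "map leaves (Rs T2)"] by (auto simp: rblock_def concat_leaves_Rs_T2)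

lemma card_nth_image: "F \<subseteq> {..<N} \<Longrightarrow> card ((!) zs ` F) = card F"
  using distinct_leaves by (intro card_image inj_on_nth) auto

lemma card_fiber_qblock_le:
  fixes s :: real
  shows "(\<And>Q. Q \<in> set (Qs T1) \<Longrightarrow> length (leaves Q) \<le> s) \<Longrightarrow> 0 \<le> s \<Longrightarrow> card (fiber N qblock a) \<le> s"
  using card_fiber_block_index_le[of "map leaves (Qs T1)" s a] distinct_leaves
  by (auto simp: qblock_def concat_leaves_Qs)

lemma card_fiber_rblock_le:
  fixes s :: real
  shows "(\<And>R. R \<in> set (Rs T2) \<Longrightarrow> length (leaves R) \<le> s) \<Longrightarrow> 0 \<le> s \<Longrightarrow> card (fiber N rblock c) \<le> s"
  using card_fiber_block_index_le[of "map leaves (Rs T2)" s c] distinct_leaves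
  by (auto simp: rblock_def concat_leaves_Rs_T2)

lemma left_comb_restr_T1:
  assumes "U \<subseteq> {..<N}" "inj_on qblock U" "C \<subseteq> (!) zs ` U" "restr C T1 = Some s"
  shows "left_comb s"
  using assms(4)
proof (rule left_comb_restr[rotated])
  show "\<forall>Q \<in> set (Qs T1). length (filter (\<lambda>x. x \<in> C) (leaves Q)) \<le> 1"
    using length_filter_le_1_if_inj_on_block_index[of "map leaves (Qs T1)" U C] assms(1-3)
      distinct_leaves by (simp add: qblock_def concat_leaves_Qs)
qed

lemma right_comb_restr_T2:
  assumes "U \<subseteq> {..<N}" "inj_on rblock U" "C \<subseteq> (!) zs ` U" "restr C T2 = Some s"
  shows "right_comb s"
  using assms(4)
proof (rule right_comb_restr[rotated])
  show "\<forall>R \<in> set (Rs T2). length (filter (\<lambda>x. x \<in> C) (leaves R)) \<le> 1"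
    using length_filter_le_1_if_inj_on_block_index[of "map leaves (Rs T2)" U C] assms(1-3)
      distinct_leaves by (simp add: rblock_def concat_leaves_Rs_T2)
qed

lemma restr_T1_T2:
  assumes "C \<subseteq> set zs" "C \<noteq> {}"
  obtains S1 S2 where "restr C T1 = Some S1" "restr C T2 = Some S2"
proof -
  have "restr C T1 \<noteq> None" "restr C T2 \<noteq> None"
    using assms same_leaves by (auto simp: restr_eq_None_iff)
  then show thesis
    using that by fastforce
qed

lemma nth_image_subset: "F \<subseteq> {..<N} \<Longrightarrow> (!) zs ` F \<subseteq> set zs"
  by auto

lemma nth_in_Qs_prefix:
  "p < N \<Longrightarrow> qblock p < a \<Longrightarrow> zs ! p \<in> set (concat (map leaves (take a (Qs T1))))"
  using nth_concat_in_take[of p "map leaves (Qs T1)" a] by (simp add: qblock_def concat_leaves_Qs take_map)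

lemma nth_in_Rs_suffix:
  "q < N \<Longrightarrow> c < rblock q \<Longrightarrow> zs ! q \<in> set (concat (map leaves (drop (Suc c) (Rs T2))))"
  using nth_concat_in_drop[of q "map leaves (Rs T2)" c] by (simp add: rblock_def concat_leaves_Rs_T2 drop_map)

lemma separated_blocks_incomparable:
  assumes sep: "\<forall>p \<in> fiber N rblock c. \<forall>q \<in> fiber N qblock a. p < q"
    and ne: "p0 \<in> fiber N rblock c" "q0 \<in> fiber N qblock a"
  defines "X \<equiv> (!) zs ` fiber N qblock a" and "Y \<equiv> (!) zs ` fiber N rblock c"
  shows "X \<inter> Y = {}" "incomparable (lca T1 X) (lca T1 Y)" "incomparable (lca T2 X) (lca T2 Y)"
proof -
  have p0: "p0 < N" "rblock p0 = c" and q0: "q0 < N" "qblock q0 = a"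
    using ne by (auto simp: fiber_def)
  have a: "a < length (Qs T1)" and c: "c < length (Rs T2)"
    using qblock[OF q0(1)] rblock[OF p0(1)] q0(2) p0(2) by simp_all
  have ne': "X \<noteq> {}" "Y \<noteq> {}"
    using ne by (auto simp: X_def Y_def)
  have X1: "X \<subseteq> set (leaves (Qs T1 ! a))" and Y2: "Y \<subseteq> set (leaves (Rs T2 ! c))"
    using qblock rblock by (auto simp: X_def Y_def fiber_def)
  have Y1: "Y \<subseteq> set (concat (map leaves (take a (Qs T1))))"
  proof
    fix y assume "y \<in> Y"
    then obtain p where p: "p \<in> fiber N rblock c" "y = zs ! p"
      by (auto simp: Y_def)
    with sep ne(2) have "p < q0" "p < N"
      by (auto simp: fiber_def)
    moreover have "qblock p \<noteq> a"
      using sep p by (auto simp: fiber_def)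
    ultimately have "qblock p < a"
      using mono_onD[OF mono_qblock, of p q0] q0 by simp
    with p(2) \<open>p < N\<close> show "y \<in> set (concat (map leaves (take a (Qs T1))))"
      using nth_in_Qs_prefix by blast
  qed
  have X2: "X \<subseteq> set (concat (map leaves (drop (Suc c) (Rs T2))))"
  proof
    fix x assume "x \<in> X"
    then obtain q where q: "q \<in> fiber N qblock a" "x = zs ! q"
      by (auto simp: X_def)
    with sep ne(1) have "p0 < q" "q < N"
      by (auto simp: fiber_def)
    moreover have "rblock q \<noteq> c"
      using sep q by (auto simp: fiber_def)
    ultimately have "c < rblock q"
      using mono_onD[OF mono_rblock, of p0 q] p0 by simp
    with q(2) \<open>q < N\<close> show "x \<in> set (concat (map leaves (drop (Suc c) (Rs T2))))"
      using nth_in_Rs_suffix by blast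
  qed
  have "X \<subseteq> set zs" "Y \<subseteq> set zs"
    using nth_image_subset fiber_subset_lessThan by (auto simp: X_def Y_def)
  then have "lca T1 X = lca_rec T1 X" "lca T1 Y = lca_rec T1 Y"
    "lca T2 X = lca_rec T2 X" "lca T2 Y = lca_rec T2 Y"
    using lca_eq_lca_rec distinct_leaves same_leaves ne' by metis+
  then show "incomparable (lca T1 X) (lca T1 Y)" "incomparable (lca T2 X) (lca T2 Y)"
    using incomparable_lca_Qs[OF distinct_leaves a ne'(1) X1 ne'(2) Y1]
      incomparable_lca_Rs[of T2 c Y X] distinct_leaves same_leaves c ne' X2 Y2
    by (simp_all add: incomparable_commute)
  show "X \<inter> Y = {}"
    using sep distinct_leaves by (auto simp: X_def Y_def fiber_def nth_eq_iff_index_eq)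
qed

lemma separated_blocks_incomparable_sets:
  fixes \<alpha> M :: real
  assumes "\<forall>p \<in> fiber N rblock c. \<forall>q \<in> fiber N qblock a. p < q" "0 < \<alpha>" "0 < M"
    and "\<alpha> \<le> card (fiber N rblock c) \<and> M \<le> card (fiber N qblock a) \<or>
      M \<le> card (fiber N rblock c) \<and> \<alpha> \<le> card (fiber N qblock a)"
  shows "\<exists>X Y. X \<subseteq> set zs \<and> Y \<subseteq> set zs \<and> X \<inter> Y = {} \<and> \<alpha> \<le> card X \<and> M \<le> card Y \<and>
    incomparable (lca T1 X) (lca T1 Y) \<and> incomparable (lca T2 X) (lca T2 Y)"
proof -
  from assms(2-4) have "0 < real (card (fiber N rblock c))" "0 < real (card (fiber N qblock a))"
    by (smt (verit))+
  then have "fiber N rblock c \<noteq> {}" "fiber N qblock a \<noteq> {}"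
    by auto
  then obtain p0 q0 where ne: "p0 \<in> fiber N rblock c" "q0 \<in> fiber N qblock a"
    by blast
  define X Y where "X = (!) zs ` fiber N qblock a" and "Y = (!) zs ` fiber N rblock c"
  have XY: "X \<inter> Y = {}" "incomparable (lca T1 X) (lca T1 Y)" "incomparable (lca T2 X) (lca T2 Y)"
    using separated_blocks_incomparable[OF assms(1) ne] by (simp_all add: X_def Y_def)
  have sub: "X \<subseteq> set zs" "Y \<subseteq> set zs"
    "card X = card (fiber N qblock a)" "card Y = card (fiber N rblock c)"
    using nth_image_subset card_nth_image fiber_subset_lessThan by (simp_all add: X_def Y_def)
  from assms(4) show ?thesis
  proof
    assume "\<alpha> \<le> card (fiber N rblock c) \<and> M \<le> card (fiber N qblock a)"
    with XY sub have "Y \<subseteq> set zs \<and> X \<subseteq> set zs \<and> Y \<inter> X = {} \<and> \<alpha> \<le> card Y \<and> M \<le> card X \<and>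
      incomparable (lca T1 Y) (lca T1 X) \<and> incomparable (lca T2 Y) (lca T2 X)"
      by (simp add: Int_commute incomparable_commute)
    then show ?thesis by blast
  next
    assume "M \<le> card (fiber N rblock c) \<and> \<alpha> \<le> card (fiber N qblock a)"
    with XY sub have "X \<subseteq> set zs \<and> Y \<subseteq> set zs \<and> X \<inter> Y = {} \<and> \<alpha> \<le> card X \<and> M \<le> card Y \<and>
      incomparable (lca T1 X) (lca T1 Y) \<and> incomparable (lca T2 X) (lca T2 Y)"
      by simp
    then show ?thesis by blast
  qed
qed

lemma transversal_common_caterpillar:
  assumes "A \<subseteq> {..<N}" "inj_on qblock A" "inj_on rblock A" "A \<noteq> {}"
  shows "common_caterpillar ((!) zs ` A) T1 T2"
proof -
  obtain S1 S2 where S: "restr ((!) zs ` A) T1 = Some S1" "restr ((!) zs ` A) T2 = Some S2"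
    using restr_T1_T2 nth_image_subset[OF assms(1)] assms(4) by blast
  then have "left_comb S1" "right_comb S2"
    using left_comb_restr_T1[OF assms(1,2)] right_comb_restr_T2[OF assms(1,3)] by blast+
  then show ?thesis
    by (intro common_caterpillarI[OF S same_leaves]) auto
qed

lemma wide_rblock_common_caterpillar:
  fixes K :: real
  assumes "0 < K" "K \<le> card (qblock ` fiber N rblock c)"
  obtains C where "C \<subseteq> set zs" "log 2 K / 2 + 1 \<le> card C" "common_caterpillar C T1 T2"
proof -
  obtain U where U: "U \<subseteq> fiber N rblock c" "inj_on qblock U" "qblock ` U = qblock ` fiber N rblock c"
    using subset_image_inj[of "qblock ` fiber N rblock c" qblock "fiber N rblock c"] by auto
  have UN: "U \<subseteq> {..<N}"
    using U(1) fiber_subset_lessThan by blast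
  have K: "K \<le> card ((!) zs ` U)"
    using assms(2) U card_image[OF U(2)] card_nth_image[OF UN] by simp
  have "U \<noteq> {}"
  proof
    assume "U = {}"
    with K assms(1) show False by simp
  qed
  then obtain p0 where "p0 \<in> U" by blast
  with U(1) have c: "c < length (Rs T2)"
    using rblock by (auto simp: fiber_def)
  let ?R = "Rs T2 ! c"
  have R: "?R \<in> set (Rs T2)" and UR: "(!) zs ` U \<subseteq> set (leaves ?R)"
    using c U(1) rblock by (auto simp: fiber_def)
  obtain C s where Cs: "C \<subseteq> (!) zs ` U" "restr C ?R = Some s" "left_comb s \<or> right_comb s"
    "log 2 K / 2 + 1 \<le> card C"
    using large_comb_restriction[OF distinct_leaves_Rs[OF _ R] UR assms(1) K] distinct_leaves same_leaves
    by metis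
  have S2: "restr C T2 = Some s"
    using restr_in_Rs[OF R] Cs(1,2) UR distinct_leaves same_leaves by auto
  have C: "C \<subseteq> set zs" "C \<noteq> {}"
    using Cs(1) nth_image_subset[OF UN] Cs(2) restr_eq_None_iff[of C] by auto
  then obtain S1 where S1: "restr C T1 = Some S1"
    using restr_T1_T2 by blast
  then have "left_comb S1"
    using left_comb_restr_T1[OF UN U(2) Cs(1)] by blast
  with Cs(3) have "common_caterpillar C T1 T2"
    by (intro common_caterpillarI[OF S1 S2 same_leaves]) auto
  with C Cs(4) that show thesis by blast
qed

lemma wide_qblock_common_caterpillar:
  fixes K :: real
  assumes "0 < K" "K \<le> card (rblock ` fiber N qblock a)"
  obtains C where "C \<subseteq> set zs" "log 2 K / 2 + 1 \<le> card C" "common_caterpillar C T1 T2"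
proof -
  obtain U where U: "U \<subseteq> fiber N qblock a" "inj_on rblock U" "rblock ` U = rblock ` fiber N qblock a"
    using subset_image_inj[of "rblock ` fiber N qblock a" rblock "fiber N qblock a"] by auto
  have UN: "U \<subseteq> {..<N}"
    using U(1) fiber_subset_lessThan by blast
  have K: "K \<le> card ((!) zs ` U)"
    using assms(2) U card_image[OF U(2)] card_nth_image[OF UN] by simp
  have "U \<noteq> {}"
  proof
    assume "U = {}"
    with K assms(1) show False by simp
  qed
  then obtain q0 where "q0 \<in> U" by blast
  with U(1) have a: "a < length (Qs T1)"
    using qblock by (auto simp: fiber_def)
  let ?Q = "Qs T1 ! a"
  have Q: "?Q \<in> set (Qs T1)" and UQ: "(!) zs ` U \<subseteq> set (leaves ?Q)"
    using a U(1) qblock by (auto simp: fiber_def)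
  obtain C s where Cs: "C \<subseteq> (!) zs ` U" "restr C ?Q = Some s" "left_comb s \<or> right_comb s"
    "log 2 K / 2 + 1 \<le> card C"
    using large_comb_restriction[OF distinct_leaves_Qs[OF distinct_leaves Q] UQ assms(1) K] by auto
  have S1: "restr C T1 = Some s"
    using restr_in_Qs[OF Q distinct_leaves] Cs(1,2) UQ by auto
  have C: "C \<subseteq> set zs" "C \<noteq> {}"
    using Cs(1) nth_image_subset[OF UN] Cs(2) restr_eq_None_iff[of C] by auto
  then obtain S2 where S2: "restr C T2 = Some S2"
    using restr_T1_T2 by blast
  then have "right_comb S2"
    using right_comb_restr_T2[OF UN U(2) Cs(1)] by blast
  with Cs(3) have "common_caterpillar C T1 T2"
    by (intro common_caterpillarI[OF S1 S2 same_leaves]) auto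
  with C Cs(4) that show thesis by blast
qed

lemma separated_blocks_or_common_caterpillar:
  fixes n :: nat
  assumes n: "2 \<le> n" "n powr (1/4) \<le> N"
    and small: "\<forall>Q \<in> set (Qs T1). length (leaves Q) \<le> N / 20" "\<forall>R \<in> set (Rs T2). length (leaves R) \<le> N / 20"
  shows "(\<exists>X Y. X \<subseteq> set zs \<and> Y \<subseteq> set zs \<and> X \<inter> Y = {} \<and>
      n powr (1/16) \<le> card X \<and> N / (10 * log 2 n) \<le> card Y \<and>
      incomparable (lca T1 X) (lca T1 Y) \<and> incomparable (lca T2 X) (lca T2 Y)) \<or>
    (\<exists>A \<subseteq> set zs. log 2 n / 48 \<le> card A \<and> common_caterpillar A T1 T2)"
proof -
  define \<alpha> K M L where "\<alpha> = real n powr (1/16)" and "K = real n powr (1/24)"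
    and "M = N / (10 * log 2 n)" and "L = log 2 n / 48"
  have "0 < N"
    using n by (auto intro: less_le_trans[of 0 "n powr (1/4)"])
  then have pos: "0 < \<alpha>" "0 < M" "1 \<le> K" "0 < L"
    using n(1) by (auto simp: \<alpha>_def M_def K_def L_def ge_one_powr_ge_zero)
  have L: "log 2 K / 2 + 1 \<ge> L"
    using n(1) by (simp add: K_def L_def log_powr)
  have long: "4 * (K * \<alpha>) * L + N / 5 + 2 * M * L < N"
    using parameters_bound[of n N] n by (simp add: \<alpha>_def K_def M_def L_def)
  have size_q: "card (fiber N qblock a) \<le> N / 20" for a
    by (rule card_fiber_qblock_le) (use small(1) in auto)
  have size_r: "card (fiber N rblock c) \<le> N / 20" for c
    by (rule card_fiber_rblock_le) (use small(2) in auto)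
  consider (separated) c a where "\<forall>p \<in> fiber N rblock c. \<forall>q \<in> fiber N qblock a. p < q"
      "\<alpha> \<le> card (fiber N rblock c) \<and> M \<le> card (fiber N qblock a) \<or>
       M \<le> card (fiber N rblock c) \<and> \<alpha> \<le> card (fiber N qblock a)"
    | (transversal) A where "A \<subseteq> {..<N}" "inj_on qblock A" "inj_on rblock A" "L \<le> card A"
    | (wide_rblock) c where "K \<le> card (qblock ` fiber N rblock c)"
    | (wide_qblock) a where "K \<le> card (rblock ` fiber N qblock a)"
    by (rule monotone_labellings_structure[OF mono_qblock mono_rblock size_q size_r pos(1-3) long])
  then show ?thesis
  proof cases
    case (separated c a)
    with pos show ?thesis
      using separated_blocks_incomparable_sets[of c a \<alpha> M] unfolding \<alpha>_def M_def by blast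
  next
    case (transversal A)
    with pos(4) have "A \<noteq> {}"
      by auto
    then have "common_caterpillar ((!) zs ` A) T1 T2"
      using transversal by (intro transversal_common_caterpillar)
    moreover have "(!) zs ` A \<subseteq> set zs" "card ((!) zs ` A) = card A"
      using transversal(1) by (simp_all add: nth_image_subset card_nth_image)
    ultimately show ?thesis
      using transversal(4) unfolding L_def by (intro disjI2) auto
  next
    case (wide_rblock c)
    obtain C where "C \<subseteq> set zs" "log 2 K / 2 + 1 \<le> card C" "common_caterpillar C T1 T2"
      by (rule wide_rblock_common_caterpillar[of K c]) (use wide_rblock pos(3) in auto)
    with L show ?thesis
      unfolding L_def by (intro disjI2) auto
  next
    case (wide_qblock a)
    obtain C where "C \<subseteq> set zs" "log 2 K / 2 + 1 \<le> card C" "common_caterpillar C T1 T2"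
      by (rule wide_qblock_common_caterpillar[of K a]) (use wide_qblock pos(3) in auto)
    with L show ?thesis
      unfolding L_def by (intro disjI2) auto
  qed
qed

end

theorem lemma4:
  shows "\<exists>n0::nat. \<forall>n \<ge> n0. \<forall>(Z::nat set) T1 T2.
    finite Z \<and> real (card Z) \<ge> real n powr (1/4) \<and>
    ztree Z T1 \<and> ztree Z T2 \<and> leaves T1 = leaves T2 \<and>
    (\<forall>Q \<in> set (Qs T1). real (length (leaves Q)) \<le> real (card Z) / 20) \<and>
    (\<forall>R \<in> set (Rs T2). real (length (leaves R)) \<le> real (card Z) / 20)
    \<longrightarrow>
    (\<exists>X Y. X \<subseteq> Z \<and> Y \<subseteq> Z \<and> X \<inter> Y = {} \<and>
        real (card X) \<ge> real n powr (1/16) \<and>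
        real (card Y) \<ge> real (card Z) / (10 * log 2 (real n)) \<and>
        incomparable (lca T1 X) (lca T1 Y) \<and> incomparable (lca T2 X) (lca T2 Y))
    \<or>
    (\<exists>A S1 S2. A \<subseteq> Z \<and> real (card A) \<ge> log 2 (real n) / 48 \<and>
        restr A T1 = Some S1 \<and> restr A T2 = Some S2 \<and>
        caterpillar_unrooted S1 \<and> caterpillar_unrooted S2 \<and> identical_unrooted S1 S2)"
proof (intro exI[of _ 2] allI impI, elim conjE, goal_cases)
  case (1 n Z T1 T2)
  then interpret common_leaf_order T1 T2
    by unfold_locales (simp_all add: ztree_def)
  have "set (leaves T1) = Z" "card Z = length (leaves T1)"
    using 1 distinct_leaves by (auto simp: ztree_def distinct_card)
  with 1 show ?case
    using separated_blocks_or_common_caterpillar[of n] unfolding common_caterpillar_def by auto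
qed

end
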